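(* Let $n\ge1$ and write the Jones–Wenzl idempotent $f_n$ in the Temperley–Lieb algebra on $n$ strands as $f_n=\sum_M c_M(A)\,M$, the sum over crossingless matchings $M$ of $n$ points to $n$ points, with $c_M(A)\in\mathbb{Q}(A)$. Then for every $M$ with $c_M\neq0$, the minimum degree of $c_M(A)$, expanded as a Laurent series in $A$, is at least $2\ell(M)$, where $\ell(M)$ is the minimum length of a word in the hook generators $h_1,\dots,h_{n-1}$ representing $M$ in the Temperley–Lieb monoid.
   Context: The Temperley–Lieb algebra on $n$ strands over $\mathbb{Q}(A)$ has basis the crossingless matchings of $n$ points on the bottom to $n$ points on the top, multiplied by stacking, with each closed loop replaced by the factor $-A^2-A^{-2}$. The Temperley–Lieb monoid is the set of crossingless matchings with stacking as product where closed loops are simply discarded; it is generated by the hooks $h_i$ ($1\le i\le n-1$), the matching that joins top points $i,i+1$ to each other, bottom points $i,i+1$ to each other, and all other points vertically. With $\Delta_m=(-1)^m\frac{A^{2(m+1)}-A^{-2(m+1)}}{A^2-A^{-2}}$, the Jones–Wenzl idempotents are defined recursively by $f_1=\mathrm{id}$ and $f_{m+1}=(f_m\otimes\mathrm{id}_1)-\frac{\Delta_{m-1}}{\Delta_m}(f_m\otimes\mathrm{id}_1)\,h_m\,(f_m\otimes\mathrm{id}_1)$. *)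

theory Defs
  imports "HOL-Computational_Algebra.Fraction_Field"
          "HOL-Computational_Algebra.Formal_Laurent_Series"
begin

text \<open>Boundary points of an n-strand diagram: (False,i) is the i-th bottom point,
 (True,i) the i-th top point (0-indexed, left to right), for i < n.
 A diagram is a fixed-point-free involution on these points, extended by the
 identity outside them (normalisation, so that diagrams are equal iff equal as functions).\<close>

type_synonym pt = "bool \<times> nat"
type_synonym diagram = "pt \<Rightarrow> pt"

definition pts :: "nat \<Rightarrow> pt set" where
  "pts n = {p. snd p < n}"

text \<open>Position of a point when walking around the boundary of the rectangle:
 bottom left-to-right, then top right-to-left.\<close>
definition bpos :: "nat \<Rightarrow> pt \<Rightarrow> nat" where
  "bpos n p = (if fst p then 2 * n - 1 - snd p else snd p)"

definition CM :: "nat \<Rightarrow> diagram set" where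
  "CM n = {M. (\<forall>p\<in>pts n. M p \<in> pts n \<and> M p \<noteq> p \<and> M (M p) = p)
            \<and> (\<forall>p. p \<notin> pts n \<longrightarrow> M p = p)
            \<and> \<not> (\<exists>p\<in>pts n. \<exists>q\<in>pts n.
                   bpos n p < bpos n q \<and> bpos n q < bpos n (M p) \<and> bpos n (M p) < bpos n (M q))}"

definition id_diag :: "nat \<Rightarrow> diagram" where
  "id_diag n = (\<lambda>(b, j). if j < n then (\<not> b, j) else (b, j))"

text \<open>Hook h_i (1 \<le> i \<le> n-1), joining points i, i+1 (1-indexed) on top and on bottom.\<close>
definition hook :: "nat \<Rightarrow> nat \<Rightarrow> diagram" where
  "hook n i = (\<lambda>(b, j). if j = i - 1 then (b, i) else if j = i then (b, i - 1)
                        else if j < n then (\<not> b, j) else (b, j))"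

text \<open>Stacking P (below) and Q (above): vertices (level, index) with level 0 = bottom of P,
 1 = middle (top of P = bottom of Q), 2 = top of Q.\<close>

definition lowlift :: "pt \<Rightarrow> nat \<times> nat" where
  "lowlift p = (if fst p then 1 else 0, snd p)"
definition uplift :: "pt \<Rightarrow> nat \<times> nat" where
  "uplift p = (if fst p then 2 else 1, snd p)"

definition glue_edges :: "nat \<Rightarrow> diagram \<Rightarrow> diagram \<Rightarrow> ((nat \<times> nat) \<times> (nat \<times> nat)) set" where
  "glue_edges n P Q = {(lowlift p, lowlift (P p)) | p. p \<in> pts n}
                    \<union> {(uplift p, uplift (Q p)) | p. p \<in> pts n}"

definition glue_conn :: "nat \<Rightarrow> diagram \<Rightarrow> diagram \<Rightarrow> ((nat \<times> nat) \<times> (nat \<times> nat)) set" where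
  "glue_conn n P Q = (glue_edges n P Q)\<^sup>*"

definition outer :: "pt \<Rightarrow> nat \<times> nat" where
  "outer p = (if fst p then 2 else 0, snd p)"

text \<open>The product in the Temperley-Lieb monoid (closed loops discarded).\<close>
definition compose :: "nat \<Rightarrow> diagram \<Rightarrow> diagram \<Rightarrow> diagram" where
  "compose n P Q = (\<lambda>p. if p \<in> pts n then
        (THE q. q \<in> pts n \<and> q \<noteq> p \<and> (outer p, outer q) \<in> glue_conn n P Q) else p)"

text \<open>Number of closed loops created by stacking: connected components of the glued
 picture consisting of middle vertices only.\<close>
definition loops :: "nat \<Rightarrow> diagram \<Rightarrow> diagram \<Rightarrow> nat" where
  "loops n P Q = card ((\<lambda>v. glue_conn n P Q `` {v}) `
      {v. fst v = 1 \<and> snd v < n \<and> (\<forall>p\<in>pts n. (v, outer p) \<notin> glue_conn n P Q)})"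

type_synonym ratfun = "rat poly fract"

definition varA :: ratfun where "varA = Fraction_Field.Fract [:0, 1:] 1"

definition laurent :: "ratfun \<Rightarrow> rat fls" where
  "laurent x = (THE L. \<exists>p q. q \<noteq> 0 \<and> x = Fraction_Field.Fract p q \<and>
        L = fps_to_fls (fps_of_poly p) / fps_to_fls (fps_of_poly q))"

definition min_deg :: "ratfun \<Rightarrow> int" where
  "min_deg x = fls_subdegree (laurent x)"

definition loop_val :: ratfun where
  "loop_val = - (varA ^ 2) - (inverse varA) ^ 2"

definition Delta :: "nat \<Rightarrow> ratfun" where
  "Delta m = (-1) ^ m * (varA ^ (2 * (m + 1)) - inverse varA ^ (2 * (m + 1)))
                       / (varA ^ 2 - inverse varA ^ 2)"

text \<open>Elements of TL_n: coefficient functions on diagrams, supported on CM n.\<close>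
type_synonym tl = "diagram \<Rightarrow> ratfun"

definition basis :: "nat \<Rightarrow> diagram \<Rightarrow> tl" where
  "basis n M = (\<lambda>D. if D = M then 1 else 0)"

definition tl_mult :: "nat \<Rightarrow> tl \<Rightarrow> tl \<Rightarrow> tl" where
  "tl_mult n a b = (\<lambda>M. \<Sum>P\<in>CM n. \<Sum>Q\<in>CM n.
      if compose n P Q = M then a P * b Q * loop_val ^ loops n P Q else 0)"

text \<open>x \<mapsto> x \<otimes> id_1 : adds a vertical strand at the right (index n).\<close>
definition tensor1 :: "nat \<Rightarrow> tl \<Rightarrow> tl" where
  "tensor1 n a = (\<lambda>M. if M (False, n) = (True, n)
                       then a (\<lambda>p. if p \<in> pts n then M p else p) else 0)"

fun jw :: "nat \<Rightarrow> tl" where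
  "jw 0 = basis 0 (id_diag 0)"
| "jw (Suc 0) = basis 1 (id_diag 1)"
| "jw (Suc (Suc m)) =
     (let g = tensor1 (Suc m) (jw (Suc m));
          r = Delta m / Delta (Suc m);
          t = tl_mult (Suc (Suc m)) (tl_mult (Suc (Suc m)) g (basis (Suc (Suc m)) (hook (Suc (Suc m)) (Suc m)))) g
      in (\<lambda>M. g M - r * t M))"

definition word_eval :: "nat \<Rightarrow> nat list \<Rightarrow> diagram" where
  "word_eval n w = foldr (\<lambda>i D. compose n (hook n i) D) w (id_diag n)"

definition hook_len :: "nat \<Rightarrow> diagram \<Rightarrow> nat" where
  "hook_len n M = (LEAST k. \<exists>w. length w = k \<and> set w \<subseteq> {1..n-1} \<and> word_eval n w = M)"

end

theory Submission
  imports Defs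
begin

(* Give a crossingless matching the cut weight: the number of its arcs crossing the vertical
   lines between consecutive positions, summed over all these lines. When P is stacked under Q,
   every arc of the product crossing a line comes from a different crossing of P or Q, and
   every closed loop crosses some line at least twice, so
     weight (P Q) + 2 * loops (P, Q) <= weight P + weight Q.
   A loop contributes -A^2 - A^-2, of minimal degree -2, a hook has weight 2, and
   Delta_(m-1) / Delta_m has minimal degree 2; by induction along the recursion every
   coefficient c_M of f_n therefore has minimal degree at least weight M.
   Conversely, a matching other than the identity has a cup (a, a + 1) on its bottom edge, and
   M = h_(a+1) M' for a matching M' of weight at most weight M - 2, so M is a product of at
   most weight M / 2 hooks. *)

section \<open>Laurent valuation on the coefficient field\<close>

abbreviation fls_of_poly :: "rat poly \<Rightarrow> rat fls" where
  "fls_of_poly p \<equiv> fps_to_fls (fps_of_poly p)"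

lemma laurent_Fract:
  assumes "q \<noteq> 0"
  shows "laurent (Fraction_Field.Fract p q) = fls_of_poly p / fls_of_poly q"
  unfolding laurent_def
proof (rule the_equality)
  fix L
  assume "\<exists>p' q'. q' \<noteq> 0 \<and> Fraction_Field.Fract p q = Fraction_Field.Fract p' q' \<and>
            L = fls_of_poly p' / fls_of_poly q'"
  then obtain p' q' where q': "q' \<noteq> 0" and eq: "Fraction_Field.Fract p q = Fraction_Field.Fract p' q'"
    and L: "L = fls_of_poly p' / fls_of_poly q'"
    by blast
  have "p * q' = p' * q" using eq assms q' by (simp add: eq_fract)
  hence "fls_of_poly p * fls_of_poly q' = fls_of_poly p' * fls_of_poly q"
    by (metis fps_of_poly_mult fls_times_fps_to_fls)
  thus "L = fls_of_poly p / fls_of_poly q" using L assms q' by (simp add: frac_eq_eq)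
qed (use assms in blast)

lemma laurent_mult: "laurent (x * y) = laurent x * laurent y"
  by (cases x, cases y) (simp add: laurent_Fract fps_of_poly_mult fls_times_fps_to_fls)

lemma laurent_add: "laurent (x + y) = laurent x + laurent y"
  by (cases x, cases y)
    (simp add: laurent_Fract fps_of_poly_mult fls_times_fps_to_fls fps_of_poly_add add_frac_eq mult.commute)

lemma laurent_zero [simp]: "laurent 0 = 0"
  by (simp add: Zero_fract_def laurent_Fract)

lemma laurent_one [simp]: "laurent 1 = 1"
  by (simp add: One_fract_def laurent_Fract)

lemma laurent_uminus: "laurent (- x) = - laurent x"
  by (cases x) (simp add: laurent_Fract fps_of_poly_uminus)

lemma laurent_diff: "laurent (x - y) = laurent x - laurent y"
  by (simp only: diff_conv_add_uminus laurent_add laurent_uminus)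

lemma laurent_eq_0_iff [simp]: "laurent x = 0 \<longleftrightarrow> x = 0"
proof (cases x)
  case (Fract a b)
  have "x = 0 \<longleftrightarrow> a = 0" using Fract by (simp add: Zero_fract_def eq_fract)
  thus ?thesis using Fract by (simp add: laurent_Fract)
qed

lemma laurent_inverse: "laurent (inverse x) = inverse (laurent x)"
proof (cases "x = 0")
  case False
  hence "laurent x * laurent (inverse x) = 1" by (metis laurent_mult laurent_one right_inverse)
  thus ?thesis by (metis inverse_unique)
qed simp

lemma laurent_divide: "laurent (x / y) = laurent x / laurent y"
  by (simp add: divide_inverse laurent_mult laurent_inverse)

lemma laurent_power: "laurent (x ^ k) = laurent x ^ k"
  by (induction k) (simp_all add: laurent_mult)

lemma laurent_varA: "laurent varA = fls_X"
  by (simp add: varA_def laurent_Fract)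

text \<open>The case \<open>x = 0\<close> is excluded explicitly: its \<open>min_deg\<close> is the junk value \<open>0\<close>.\<close>

definition min_deg_ge :: "int \<Rightarrow> ratfun \<Rightarrow> bool" where
  "min_deg_ge k x \<longleftrightarrow> x = 0 \<or> k \<le> min_deg x"

lemma min_deg_ge_iff: "min_deg_ge k x \<longleftrightarrow> (\<forall>i<k. fls_nth (laurent x) i = 0)"
proof
  assume h: "\<forall>i<k. fls_nth (laurent x) i = 0"
  show "min_deg_ge k x"
    using fls_subdegree_geI[of "laurent x" k] h by (auto simp: min_deg_ge_def min_deg_def)
qed (auto simp: min_deg_ge_def min_deg_def)

lemma min_deg_ge_zero [simp]: "min_deg_ge k 0"
  by (simp add: min_deg_ge_def)

lemma min_deg_ge_one: "min_deg_ge 0 1"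
  by (simp add: min_deg_ge_def min_deg_def)

lemma min_deg_geD: "min_deg_ge k x \<Longrightarrow> x \<noteq> 0 \<Longrightarrow> k \<le> min_deg x"
  by (simp add: min_deg_ge_def)

lemma min_deg_ge_mono: "min_deg_ge k x \<Longrightarrow> k' \<le> k \<Longrightarrow> min_deg_ge k' x"
  by (auto simp: min_deg_ge_def)

lemma min_deg_ge_add: "min_deg_ge k x \<Longrightarrow> min_deg_ge k y \<Longrightarrow> min_deg_ge k (x + y)"
  by (simp add: min_deg_ge_iff laurent_add)

lemma min_deg_ge_diff: "min_deg_ge k x \<Longrightarrow> min_deg_ge k y \<Longrightarrow> min_deg_ge k (x - y)"
  by (simp add: min_deg_ge_iff laurent_diff)

lemma min_deg_ge_sum:
  "finite A \<Longrightarrow> (\<And>a. a \<in> A \<Longrightarrow> min_deg_ge k (f a)) \<Longrightarrow> min_deg_ge k (sum f A)"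
  by (induction A rule: finite_induct) (auto intro: min_deg_ge_add)

lemma min_deg_ge_mult: "min_deg_ge k x \<Longrightarrow> min_deg_ge l y \<Longrightarrow> min_deg_ge (k + l) (x * y)"
  by (cases "x = 0 \<or> y = 0") (auto simp: min_deg_ge_def min_deg_def laurent_mult)

lemma min_deg_eq_imp_min_deg_ge: "fls_subdegree (laurent x) = k \<Longrightarrow> min_deg_ge k x"
  by (simp add: min_deg_ge_def min_deg_def)

lemma fls_subdegree_X_power_diff_X_inv_power:
  assumes "k > 0"
  shows "fls_X ^ k - fls_X_inv ^ k \<noteq> (0 :: rat fls)"
    and "fls_subdegree (fls_X ^ k - fls_X_inv ^ k :: rat fls) = - int k"
proof -
  have "fls_subdegree (fls_X ^ k :: rat fls) \<noteq> fls_subdegree (fls_X_inv ^ k :: rat fls)"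
    using assms by simp
  thus "fls_X ^ k - fls_X_inv ^ k \<noteq> (0 :: rat fls)" by (metis eq_iff_diff_eq_0)
  show "fls_subdegree (fls_X ^ k - fls_X_inv ^ k :: rat fls) = - int k"
    using assms by (subst fls_subdegree_diff_eq2) auto
qed

lemma laurent_Delta:
  "laurent (Delta m) = (-1) ^ m * (fls_X ^ (2 * (m + 1)) - fls_X_inv ^ (2 * (m + 1))) / (fls_X ^ 2 - fls_X_inv ^ 2)"
  by (simp add: Delta_def laurent_mult laurent_divide laurent_diff laurent_power laurent_varA
      laurent_inverse fls_inverse_X laurent_uminus)

lemma fls_subdegree_laurent_Delta:
  "laurent (Delta m) \<noteq> 0" "fls_subdegree (laurent (Delta m)) = - 2 * int m"
proof -
  note num = fls_subdegree_X_power_diff_X_inv_power[of "2 * (m + 1)"]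
  note den = fls_subdegree_X_power_diff_X_inv_power[of 2]
  have sign: "((-1) ^ m :: rat fls) \<noteq> 0" "fls_subdegree ((-1) ^ m :: rat fls) = 0"
    by (auto simp: fls_subdegree_pow)
  show "laurent (Delta m) \<noteq> 0" using num den sign by (simp add: laurent_Delta)
  show "fls_subdegree (laurent (Delta m)) = - 2 * int m"
    using num den sign by (simp add: laurent_Delta fls_divide_subdegree)
qed

lemma min_deg_ge_Delta_ratio: "min_deg_ge 2 (Delta m / Delta (Suc m))"
  using fls_subdegree_laurent_Delta[of m] fls_subdegree_laurent_Delta[of "Suc m"]
  by (intro min_deg_eq_imp_min_deg_ge) (simp add: laurent_divide fls_divide_subdegree)

lemma fls_subdegree_laurent_loop_val:
  "laurent loop_val \<noteq> 0" "fls_subdegree (laurent loop_val) = -2"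
proof -
  have eq: "laurent loop_val = - (fls_X ^ 2 + fls_X_inv ^ 2)"
    by (simp add: loop_val_def laurent_diff laurent_uminus laurent_power laurent_varA
        laurent_inverse fls_inverse_X)
  have sub: "fls_subdegree (fls_X ^ 2 + fls_X_inv ^ 2 :: rat fls) = -2"
    by (subst fls_subdegree_add_eq2) auto
  hence "fls_X ^ 2 + fls_X_inv ^ 2 \<noteq> (0 :: rat fls)" by auto
  thus "laurent loop_val \<noteq> 0" "fls_subdegree (laurent loop_val) = -2"
    using sub by (simp_all only: eq fls_uminus_subdegree neg_equal_0_iff_equal) simp
qed

lemma min_deg_ge_loop_val_power: "min_deg_ge (- 2 * int k) (loop_val ^ k)"
  using fls_subdegree_laurent_loop_val
  by (intro min_deg_eq_imp_min_deg_ge) (simp add: laurent_power fls_subdegree_pow)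

section \<open>Stacking two crossingless matchings\<close>

lemma even_card_involution:
  assumes "finite A" and "\<And>x. x \<in> A \<Longrightarrow> f x \<in> A \<and> f x \<noteq> x \<and> f (f x) = x"
  shows "even (card A)"
  using assms
proof (induction "card A" arbitrary: A rule: less_induct)
  case less
  show ?case
  proof (cases "A = {}")
    case False
    then obtain x where x: "x \<in> A" by blast
    have fx: "f x \<in> A" "f x \<noteq> x" using less.prems x by auto
    let ?B = "A - {x, f x}"
    have card_A: "card A = card ?B + 2"
      using fx x less.prems(1) card_Diff_subset[of "{x, f x}" A] card_mono[of A "{x, f x}"] by auto
    have "even (card ?B)"
    proof (rule less.hyps)
      fix y assume "y \<in> ?B"
      hence "f y \<noteq> x" "f y \<noteq> f x" using less.prems(2) x by (metis DiffD1 DiffD2 insertCI)+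
      thus "f y \<in> ?B \<and> f y \<noteq> y \<and> f (f y) = y" using less.prems(2) \<open>y \<in> ?B\<close> by auto
    qed (use card_A less.prems in auto)
    thus ?thesis using card_A by simp
  qed simp
qed

lemma finite_pts: "finite (pts n)"
  by (rule finite_subset[of _ "UNIV \<times> {..<n}"]) (auto simp: pts_def)

lemma CM_involution: "D \<in> CM n \<Longrightarrow> p \<in> pts n \<Longrightarrow> D p \<in> pts n \<and> D p \<noteq> p \<and> D (D p) = p"
  by (simp add: CM_def)

lemma CM_outside: "D \<in> CM n \<Longrightarrow> p \<notin> pts n \<Longrightarrow> D p = p"
  by (cases p) (simp add: CM_def)

lemma finite_CM: "finite (CM n)"
proof -
  define F where "F = (\<lambda>M::diagram. \<lambda>p. if p \<in> pts n then M p else undefined)"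
  have "inj_on F (CM n)"
  proof (rule inj_onI, rule ext)
    fix M M' p assume M: "M \<in> CM n" and M': "M' \<in> CM n" and eq: "F M = F M'"
    show "M p = M' p"
      using fun_cong[OF eq, of p] CM_outside[OF M, of p] CM_outside[OF M', of p]
      by (cases "p \<in> pts n") (auto simp: F_def)
  qed
  moreover have "F ` CM n \<subseteq> {f. \<forall>x. (x \<in> pts n \<longrightarrow> f x \<in> pts n) \<and> (x \<notin> pts n \<longrightarrow> f x = undefined)}"
    using CM_involution by (auto simp: F_def)
  hence "finite (F ` CM n)"
    by (rule finite_subset) (intro finite_set_of_finite_funs finite_pts)
  ultimately show ?thesis by (rule finite_imageD[rotated])
qed

lemma snd_outer [simp]: "snd (outer p) = snd p"
  by (simp add: outer_def)

lemma fst_outer_neq_1 [simp]: "fst (outer p) \<noteq> 1"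
  by (simp add: outer_def)

lemma outer_inj: "outer p = outer q \<Longrightarrow> p = q"
  by (cases p; cases q) (auto simp: outer_def split: if_splits)

text \<open>The stacked picture is a graph on the vertices \<open>(level, index)\<close>: the edges of \<open>P\<close> join
  levels 0 and 1, those of \<open>Q\<close> levels 1 and 2. Every middle vertex has exactly one neighbour
  through each diagram, every outer vertex a single neighbour, so the component of an outer
  vertex is a path.\<close>

locale stacking =
  fixes n :: nat and P Q :: diagram
  assumes P: "P \<in> CM n" and Q: "Q \<in> CM n"
begin

abbreviation E where "E \<equiv> glue_edges n P Q"
abbreviation C where "C \<equiv> glue_conn n P Q"

definition V01 :: "(nat \<times> nat) set" where "V01 = {v. fst v \<le> 1 \<and> snd v < n}"
definition V12 :: "(nat \<times> nat) set" where "V12 = {v. 1 \<le> fst v \<and> fst v \<le> 2 \<and> snd v < n}"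

definition unlow :: "nat \<times> nat \<Rightarrow> pt" where "unlow v = (fst v = 1, snd v)"
definition unup :: "nat \<times> nat \<Rightarrow> pt" where "unup v = (fst v = 2, snd v)"

definition NP :: "nat \<times> nat \<Rightarrow> nat \<times> nat" where "NP v = lowlift (P (unlow v))"
definition NQ :: "nat \<times> nat \<Rightarrow> nat \<times> nat" where "NQ v = uplift (Q (unup v))"

lemma V01_iff: "v \<in> V01 \<longleftrightarrow> fst v \<le> 1 \<and> snd v < n" by (simp add: V01_def)
lemma V12_iff: "v \<in> V12 \<longleftrightarrow> 1 \<le> fst v \<and> fst v \<le> 2 \<and> snd v < n" by (simp add: V12_def)

lemma lowlift_unlow: "v \<in> V01 \<Longrightarrow> lowlift (unlow v) = v"
  by (cases v) (auto simp: V01_def lowlift_def unlow_def)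
lemma unlow_lowlift [simp]: "unlow (lowlift p) = p"
  by (cases p) (auto simp: lowlift_def unlow_def)
lemma uplift_unup: "v \<in> V12 \<Longrightarrow> uplift (unup v) = v"
  by (cases v) (auto simp: V12_def uplift_def unup_def)
lemma unup_uplift [simp]: "unup (uplift p) = p"
  by (cases p) (auto simp: uplift_def unup_def)
lemma lowlift_V01: "p \<in> pts n \<Longrightarrow> lowlift p \<in> V01"
  by (auto simp: V01_def lowlift_def pts_def)
lemma uplift_V12: "p \<in> pts n \<Longrightarrow> uplift p \<in> V12"
  by (auto simp: V12_def uplift_def pts_def)
lemma unlow_pts: "v \<in> V01 \<Longrightarrow> unlow v \<in> pts n"
  by (auto simp: V01_def unlow_def pts_def)
lemma unup_pts: "v \<in> V12 \<Longrightarrow> unup v \<in> pts n"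
  by (auto simp: V12_def unup_def pts_def)
lemma snd_lowlift [simp]: "snd (lowlift p) = snd p" by (simp add: lowlift_def)
lemma snd_uplift [simp]: "snd (uplift p) = snd p" by (simp add: uplift_def)
lemma snd_unlow [simp]: "snd (unlow v) = snd v" by (simp add: unlow_def)
lemma snd_unup [simp]: "snd (unup v) = snd v" by (simp add: unup_def)

lemma NP_involution: "v \<in> V01 \<Longrightarrow> NP v \<in> V01 \<and> NP v \<noteq> v \<and> NP (NP v) = v"
proof -
  assume v: "v \<in> V01"
  have "P (unlow v) \<in> pts n" "P (unlow v) \<noteq> unlow v" "P (P (unlow v)) = unlow v"
    using CM_involution[OF P unlow_pts[OF v]] by auto
  thus ?thesis using v
    by (auto simp: NP_def lowlift_unlow lowlift_V01) (metis lowlift_unlow unlow_lowlift)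
qed

lemma NQ_involution: "v \<in> V12 \<Longrightarrow> NQ v \<in> V12 \<and> NQ v \<noteq> v \<and> NQ (NQ v) = v"
proof -
  assume v: "v \<in> V12"
  have "Q (unup v) \<in> pts n" "Q (unup v) \<noteq> unup v" "Q (Q (unup v)) = unup v"
    using CM_involution[OF Q unup_pts[OF v]] by auto
  thus ?thesis using v
    by (auto simp: NQ_def uplift_unup uplift_V12) (metis uplift_unup unup_uplift)
qed

lemma E_iff: "(u, w) \<in> E \<longleftrightarrow> (u \<in> V01 \<and> w = NP u) \<or> (u \<in> V12 \<and> w = NQ u)"
proof
  assume "(u, w) \<in> E"
  then obtain p where "p \<in> pts n"
    "(u = lowlift p \<and> w = lowlift (P p)) \<or> (u = uplift p \<and> w = uplift (Q p))"
    unfolding glue_edges_def by blast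
  thus "(u \<in> V01 \<and> w = NP u) \<or> (u \<in> V12 \<and> w = NQ u)"
    by (auto simp: NP_def NQ_def lowlift_V01 uplift_V12)
next
  assume "(u \<in> V01 \<and> w = NP u) \<or> (u \<in> V12 \<and> w = NQ u)"
  thus "(u, w) \<in> E"
  proof
    assume "u \<in> V01 \<and> w = NP u"
    hence "u = lowlift (unlow u)" "w = lowlift (P (unlow u))" "unlow u \<in> pts n"
      by (auto simp: lowlift_unlow NP_def unlow_pts)
    thus ?thesis unfolding glue_edges_def by blast
  next
    assume "u \<in> V12 \<and> w = NQ u"
    hence "u = uplift (unup u)" "w = uplift (Q (unup u))" "unup u \<in> pts n"
      by (auto simp: uplift_unup NQ_def unup_pts)
    thus ?thesis unfolding glue_edges_def by blast
  qed
qed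

lemma E_sym: "(u, w) \<in> E \<Longrightarrow> (w, u) \<in> E"
proof -
  assume "(u, w) \<in> E"
  hence "(u \<in> V01 \<and> w = NP u) \<or> (u \<in> V12 \<and> w = NQ u)" by (simp add: E_iff)
  hence "(w \<in> V01 \<and> u = NP w) \<or> (w \<in> V12 \<and> u = NQ w)"
    using NP_involution[of u] NQ_involution[of u] by metis
  thus ?thesis by (simp add: E_iff)
qed

lemma C_refl: "(u, u) \<in> C"
  by (simp add: glue_conn_def)

lemma E_imp_C: "(u, w) \<in> E \<Longrightarrow> (u, w) \<in> C"
  by (simp add: glue_conn_def)

lemma C_trans: "(u, v) \<in> C \<Longrightarrow> (v, w) \<in> C \<Longrightarrow> (u, w) \<in> C"
  by (simp add: glue_conn_def)

lemma C_sym: "(u, w) \<in> C \<Longrightarrow> (w, u) \<in> C"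
  unfolding glue_conn_def
proof (induction rule: rtrancl_induct)
  case (step y z)
  thus ?case using E_sym by (meson converse_rtrancl_into_rtrancl)
qed simp

lemma C_closed_set:
  assumes "(u, w) \<in> C" and "u \<in> S" and closed: "\<And>x y. x \<in> S \<Longrightarrow> (x, y) \<in> E \<Longrightarrow> y \<in> S"
  shows "w \<in> S"
  using assms(1,2) unfolding glue_conn_def
proof (induction rule: rtrancl_induct)
  case (step y z)
  thus ?case using closed by blast
qed

lemma C_bounded: "(u, w) \<in> C \<Longrightarrow> fst u \<le> 2 \<Longrightarrow> snd u < n \<Longrightarrow> fst w \<le> 2 \<and> snd w < n"
  unfolding glue_conn_def
proof (induction rule: rtrancl_induct)
  case (step y z)
  thus ?case using NP_involution[of y] NQ_involution[of y] by (auto simp: E_iff V01_iff V12_iff)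
qed simp

lemma outer_neighbour_unique:
  assumes "fst u \<noteq> 1" "(u, w) \<in> E" "(u, w') \<in> E"
  shows "w = w'"
  using assms by (auto simp: E_iff V01_iff V12_iff)

lemma even_card_outer_of_closed:
  assumes fin: "finite S" and bounded: "\<And>v. v \<in> S \<Longrightarrow> fst v \<le> 2 \<and> snd v < n"
    and closed: "\<And>x y. x \<in> S \<Longrightarrow> (x, y) \<in> E \<Longrightarrow> y \<in> S"
  shows "even (card {v \<in> S. fst v \<noteq> 1})"
proof -
  define S0 S1 S2 where "S0 = {v \<in> S. fst v = 0}" and "S1 = {v \<in> S. fst v = 1}"
    and "S2 = {v \<in> S. fst v = 2}"
  have fin': "finite S0" "finite S1" "finite S2" using fin by (auto simp: S0_def S1_def S2_def)
  have lev: "fst v = 0 \<or> fst v = 1 \<or> fst v = 2" "snd v < n" if "v \<in> S" for v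
    using bounded[OF that] by auto
  have split: "S \<inter> V01 = S0 \<union> S1" "S \<inter> V12 = S1 \<union> S2" "{v \<in> S. fst v \<noteq> 1} = S0 \<union> S2"
    using lev by (fastforce simp: S0_def S1_def S2_def V01_iff V12_iff)+
  have disj: "S0 \<inter> S1 = {}" "S1 \<inter> S2 = {}" "S0 \<inter> S2 = {}"
    by (auto simp: S0_def S1_def S2_def)
  have "even (card (S \<inter> V01))"
  proof (rule even_card_involution[where f = NP])
    fix x assume "x \<in> S \<inter> V01"
    thus "NP x \<in> S \<inter> V01 \<and> NP x \<noteq> x \<and> NP (NP x) = x"
      using closed[of x "NP x"] NP_involution[of x] by (auto simp: E_iff)
  qed (use fin in simp)
  moreover have "even (card (S \<inter> V12))"
  proof (rule even_card_involution[where f = NQ])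
    fix x assume "x \<in> S \<inter> V12"
    thus "NQ x \<in> S \<inter> V12 \<and> NQ x \<noteq> x \<and> NQ (NQ x) = x"
      using closed[of x "NQ x"] NQ_involution[of x] by (auto simp: E_iff)
  qed (use fin in simp)
  ultimately show ?thesis
    unfolding split using fin' disj by (simp add: card_Un_disjoint)
qed

text \<open>A walk state is a vertex together with a flag telling whether the next edge to follow
  belongs to \<open>P\<close>; the flag alternates, so the walk never turns back.\<close>

definition walk_step :: "(nat \<times> nat) \<times> bool \<Rightarrow> (nat \<times> nat) \<times> bool" where
  "walk_step d = (if snd d then NP (fst d) else NQ (fst d), \<not> snd d)"

definition walk_ok :: "(nat \<times> nat) \<times> bool \<Rightarrow> bool" where
  "walk_ok d \<longleftrightarrow> (if snd d then fst d \<in> V01 else fst d \<in> V12)"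

definition walk :: "pt \<Rightarrow> nat \<Rightarrow> (nat \<times> nat) \<times> bool" where
  "walk p k = (walk_step ^^ k) (outer p, \<not> fst p)"

definition walk_vtx :: "pt \<Rightarrow> nat \<Rightarrow> nat \<times> nat" where
  "walk_vtx p k = fst (walk p k)"

definition exit_time :: "pt \<Rightarrow> nat" where
  "exit_time p = (LEAST k. 0 < k \<and> fst (walk_vtx p k) \<noteq> 1)"

lemma walk_0: "walk p 0 = (outer p, \<not> fst p)"
  by (simp add: walk_def)

lemma walk_Suc: "walk p (Suc k) = walk_step (walk p k)"
  by (simp add: walk_def)

lemma walk_vtx_0: "walk_vtx p 0 = outer p"
  by (simp add: walk_vtx_def walk_0)

lemma walk_ok_0: "p \<in> pts n \<Longrightarrow> walk_ok (walk p 0)"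
  by (cases p) (auto simp: walk_0 walk_ok_def outer_def V01_iff V12_iff pts_def)

lemma walk_step_ok: "walk_ok d \<Longrightarrow> fst (fst (walk_step d)) = 1 \<Longrightarrow> walk_ok (walk_step d)"
  using NP_involution[of "fst d"] NQ_involution[of "fst d"]
  by (auto simp: walk_ok_def walk_step_def V01_iff V12_iff split: if_splits)

lemma walk_step_bounded: "walk_ok d \<Longrightarrow> fst (fst (walk_step d)) \<le> 2 \<and> snd (fst (walk_step d)) < n"
  using NP_involution[of "fst d"] NQ_involution[of "fst d"]
  by (auto simp: walk_ok_def walk_step_def V01_iff V12_iff split: if_splits)

lemma walk_step_inj: "walk_ok d \<Longrightarrow> walk_ok d' \<Longrightarrow> walk_step d = walk_step d' \<Longrightarrow> d = d'"
  using NP_involution[of "fst d"] NP_involution[of "fst d'"] NQ_involution[of "fst d"] NQ_involution[of "fst d'"]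
  by (cases d; cases d') (auto simp: walk_ok_def walk_step_def split: if_splits)

lemma walk_ok_while_middle:
  assumes "p \<in> pts n" and "\<And>i. 0 < i \<Longrightarrow> i \<le> k \<Longrightarrow> fst (walk_vtx p i) = 1"
  shows "walk_ok (walk p k)"
  using assms(2)
proof (induction k)
  case 0
  thus ?case using walk_ok_0[OF assms(1)] by simp
next
  case (Suc k)
  have "fst (fst (walk_step (walk p k))) = 1"
    using Suc.prems[of "Suc k"] by (simp add: walk_vtx_def walk_Suc)
  thus ?case using walk_step_ok Suc by (simp add: walk_Suc)
qed

lemma walk_exits:
  assumes p: "p \<in> pts n"
  shows "\<exists>k>0. fst (walk_vtx p k) \<noteq> 1"
proof (rule ccontr)
  assume "\<not> ?thesis"
  hence middle: "fst (walk_vtx p k) = 1" if "0 < k" for k using that by blast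
  have ok: "walk_ok (walk p k)" for k using walk_ok_while_middle[OF p] middle by blast
  have "walk p k \<in> ({..2} \<times> {..<n}) \<times> UNIV" for k
    using ok[of k] by (auto simp: walk_ok_def V01_iff V12_iff mem_Times_iff split: if_splits)
  hence "range (walk p) \<subseteq> ({..2} \<times> {..<n}) \<times> UNIV" by blast
  moreover have "finite (({..2::nat} \<times> {..<n}) \<times> (UNIV :: bool set))" by simp
  ultimately have "finite (range (walk p))" by (rule finite_subset)
  hence "\<not> inj (walk p)"
    using finite_imageD[of "walk p" UNIV] infinite_UNIV_nat by blast
  then obtain a b where ab: "a \<noteq> b" "walk p a = walk p b"
    unfolding inj_def by blast
  define i j where "i = min a b" and "j = max a b"
  have "i < j" "walk p i = walk p j"
    using ab by (auto simp: i_def j_def min_def max_def)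
  hence "walk p 0 = walk p (j - i)"
  proof (induction i arbitrary: j)
    case (Suc i)
    then obtain j' where j: "j = Suc j'" by (cases j) auto
    have "walk p i = walk p j'"
      using Suc.prems walk_step_inj[OF ok ok] by (simp add: j walk_Suc)
    thus ?case using Suc.IH[of j'] Suc.prems j by simp
  qed simp
  hence "walk_vtx p (j - i) = outer p" by (metis walk_vtx_def walk_vtx_0)
  thus False using middle[of "j - i"] \<open>i < j\<close> by (simp add: outer_def split: if_splits)
qed

context
  fixes p assumes p: "p \<in> pts n"
begin

lemma exit_time_pos: "0 < exit_time p"
  and middle_at_exit_time: "fst (walk_vtx p (exit_time p)) \<noteq> 1"
  using LeastI_ex[OF walk_exits[OF p]] by (auto simp: exit_time_def)

lemma middle_before_exit_time: "0 < k \<Longrightarrow> k < exit_time p \<Longrightarrow> fst (walk_vtx p k) = 1"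
  using not_less_Least[of k "\<lambda>k. 0 < k \<and> fst (walk_vtx p k) \<noteq> 1"] by (auto simp: exit_time_def)

lemma walk_ok_before_exit:
  assumes "k < exit_time p"
  shows "walk_ok (walk p k)"
proof (rule walk_ok_while_middle[OF p])
  fix i assume "0 < i" "i \<le> k"
  thus "fst (walk_vtx p i) = 1" using middle_before_exit_time assms by simp
qed

lemma walk_vtx_bounded:
  assumes "k \<le> exit_time p"
  shows "fst (walk_vtx p k) \<le> 2 \<and> snd (walk_vtx p k) < n"
proof (cases k)
  case 0
  thus ?thesis using p by (cases p) (auto simp: walk_vtx_0 outer_def pts_def)
next
  case (Suc k')
  hence "walk_ok (walk p k')" using walk_ok_before_exit assms by simp
  thus ?thesis using walk_step_bounded Suc by (simp add: walk_vtx_def walk_Suc)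
qed

lemma walk_vtx_Suc:
  "walk_vtx p (Suc k) = (if snd (walk p k) then NP else NQ) (walk_vtx p k)"
  by (simp add: walk_vtx_def walk_Suc walk_step_def)

lemma walk_edge: "k < exit_time p \<Longrightarrow> (walk_vtx p k, walk_vtx p (Suc k)) \<in> E"
  using walk_ok_before_exit[of k] unfolding walk_vtx_Suc
  by (cases "snd (walk p k)") (simp_all add: E_iff walk_ok_def walk_vtx_def)

lemma walk_vtx_back:
  assumes "0 < k" "k \<le> exit_time p"
  shows "(if snd (walk p k) then NQ else NP) (walk_vtx p k) = walk_vtx p (k - 1)"
proof -
  obtain k' where k: "k = Suc k'" using assms by (cases k) auto
  have "walk_ok (walk p k')" using walk_ok_before_exit assms k by simp
  thus ?thesis using k NP_involution NQ_involution
    by (auto simp: walk_vtx_Suc walk_Suc walk_step_def walk_ok_def walk_vtx_def)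
qed

lemma conn_walk_vtx: "k \<le> exit_time p \<Longrightarrow> (outer p, walk_vtx p k) \<in> C"
proof (induction k)
  case (Suc k)
  hence "(outer p, walk_vtx p k) \<in> C" "(walk_vtx p k, walk_vtx p (Suc k)) \<in> E"
    using walk_edge by simp_all
  thus ?case using C_trans E_imp_C by blast
qed (simp add: walk_vtx_0 C_refl)

definition walk_set :: "(nat \<times> nat) set" where
  "walk_set = walk_vtx p ` {..exit_time p}"

lemma walk_vtx_in_walk_set: "j \<le> exit_time p \<Longrightarrow> walk_vtx p j \<in> walk_set"
  by (simp add: walk_set_def)

lemma outer_in_walk_set: "outer p \<in> walk_set"
  using walk_vtx_in_walk_set[of 0] by (simp add: walk_vtx_0)

lemma walk_set_closed:
  assumes "u \<in> walk_set" "(u, w) \<in> E"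
  shows "w \<in> walk_set"
proof -
  obtain k where k: "k \<le> exit_time p" "u = walk_vtx p k" using assms(1) by (auto simp: walk_set_def)
  consider "k = 0" | "k = exit_time p" | "0 < k" "k < exit_time p" using k by linarith
  thus ?thesis
  proof cases
    case 1
    have "(u, walk_vtx p (Suc 0)) \<in> E" using walk_edge[OF exit_time_pos] 1 k by simp
    moreover have "fst u \<noteq> 1" using 1 k walk_vtx_0 fst_outer_neq_1 by simp
    ultimately have "w = walk_vtx p (Suc 0)" using outer_neighbour_unique assms(2) by metis
    thus ?thesis using walk_vtx_in_walk_set exit_time_pos by simp
  next
    case 2
    have "(walk_vtx p (k - 1), u) \<in> E" using walk_edge[of "k - 1"] 2 exit_time_pos k by simp
    hence "(u, walk_vtx p (k - 1)) \<in> E" by (rule E_sym)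
    moreover have "fst u \<noteq> 1" using middle_at_exit_time 2 k by simp
    ultimately have "w = walk_vtx p (k - 1)" using outer_neighbour_unique assms(2) by metis
    thus ?thesis using walk_vtx_in_walk_set k by simp
  next
    case 3
    define c where "c = snd (walk p k)"
    have fwd: "walk_vtx p (Suc k) = (if c then NP u else NQ u)"
      using walk_vtx_Suc[of k] k by (simp add: c_def)
    have bwd: "walk_vtx p (k - 1) = (if c then NQ u else NP u)"
      using walk_vtx_back[of k] 3 k by (cases c) (simp_all add: c_def)
    have "u \<in> V01" "u \<in> V12" using middle_before_exit_time[OF 3] walk_vtx_bounded[of k] 3 k
      by (auto simp: V01_iff V12_iff)
    hence "w = NP u \<or> w = NQ u" using assms(2) by (auto simp: E_iff)
    hence "w = walk_vtx p (Suc k) \<or> w = walk_vtx p (k - 1)" using fwd bwd by (cases c) auto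
    thus ?thesis using walk_vtx_in_walk_set 3 by auto
  qed
qed

lemma conn_imp_walk_set:
  assumes "(outer p, w) \<in> C"
  shows "w \<in> walk_set"
  by (rule C_closed_set[OF assms outer_in_walk_set walk_set_closed])

lemma walk_set_outer:
  assumes "w \<in> walk_set" "fst w \<noteq> 1"
  shows "w = outer p \<or> w = walk_vtx p (exit_time p)"
proof -
  obtain k where k: "k \<le> exit_time p" "w = walk_vtx p k" using assms(1) by (auto simp: walk_set_def)
  have "\<not> (0 < k \<and> k < exit_time p)" using middle_before_exit_time[of k] assms(2) k(2) by auto
  hence "k = 0 \<or> k = exit_time p" using k(1) by linarith
  thus ?thesis using k by (auto simp: walk_vtx_0)
qed

definition exit_point :: pt where
  "exit_point = (fst (walk_vtx p (exit_time p)) = 2, snd (walk_vtx p (exit_time p)))"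

lemma outer_exit_point: "outer exit_point = walk_vtx p (exit_time p)"
  using middle_at_exit_time walk_vtx_bounded[of "exit_time p"]
  by (cases "walk_vtx p (exit_time p)") (auto simp: exit_point_def outer_def)

lemma exit_point_in_pts: "exit_point \<in> pts n"
  using walk_vtx_bounded[of "exit_time p"] by (simp add: exit_point_def pts_def)

lemma conn_exit_point: "(outer p, outer exit_point) \<in> C"
  using conn_walk_vtx outer_exit_point by simp

text \<open>Parity: a component of the stacked picture contains an even number of outer vertices,
  while a path returning to its start would contain only one.\<close>

lemma exit_point_neq: "exit_point \<noteq> p"
proof
  assume eq: "exit_point = p"
  have "{v \<in> walk_set. fst v \<noteq> 1} = {outer p}"
  proof (rule set_eqI, rule iffI)
    fix v assume "v \<in> {v \<in> walk_set. fst v \<noteq> 1}"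
    thus "v \<in> {outer p}" using walk_set_outer[of v] outer_exit_point eq by auto
  qed (use outer_in_walk_set fst_outer_neq_1 in auto)
  moreover have "even (card {v \<in> walk_set. fst v \<noteq> 1})"
  proof (rule even_card_outer_of_closed)
    show "finite walk_set" by (simp add: walk_set_def)
    show "fst v \<le> 2 \<and> snd v < n" if "v \<in> walk_set" for v
      using that walk_vtx_bounded by (auto simp: walk_set_def)
  qed (rule walk_set_closed)
  ultimately show False by simp
qed

lemma conn_outer_cases:
  assumes "(outer p, outer q) \<in> C"
  shows "q = p \<or> q = exit_point"
proof -
  have "outer q = outer p \<or> outer q = outer exit_point"
    using walk_set_outer[OF conn_imp_walk_set[OF assms] fst_outer_neq_1] outer_exit_point by simp
  thus ?thesis using outer_inj by blast
qed

lemma compose_eq_exit_point: "compose n P Q p = exit_point"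
proof -
  have "(THE q. q \<in> pts n \<and> q \<noteq> p \<and> (outer p, outer q) \<in> C) = exit_point"
    using exit_point_in_pts exit_point_neq conn_exit_point conn_outer_cases by (intro the_equality) auto
  thus ?thesis using p by (simp add: compose_def)
qed

end

lemma conn_compose: "p \<in> pts n \<Longrightarrow> (outer p, outer (compose n P Q p)) \<in> C"
  using compose_eq_exit_point conn_exit_point by simp

lemma conn_outer_compose: "p \<in> pts n \<Longrightarrow> (outer p, outer q) \<in> C \<Longrightarrow> q = p \<or> q = compose n P Q p"
  using conn_outer_cases compose_eq_exit_point by simp

end

section \<open>A cut weight that is subadditive under stacking\<close>

text \<open>The cut \<open>j\<close> is the vertical line separating the indices \<open>< j\<close> from those \<open>\<ge> j\<close>;
  every arc crossing it is counted once, at its left endpoint.\<close>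

definition cut_crossings :: "nat \<Rightarrow> nat \<Rightarrow> diagram \<Rightarrow> nat" where
  "cut_crossings n j D = card {p \<in> pts n. snd p < j \<and> j \<le> snd (D p)}"

definition cut_weight :: "nat \<Rightarrow> diagram \<Rightarrow> nat" where
  "cut_weight n D = (\<Sum>j\<le>n. cut_crossings n j D)"

lemma even_card_leaving_involution:
  assumes fin: "finite K" and inv: "\<And>x. x \<in> K \<Longrightarrow> f x \<in> K \<and> f x \<noteq> x \<and> f (f x) = x"
  shows "even (card {x \<in> K. L x \<and> \<not> L (f x)}) \<longleftrightarrow> even (card {x \<in> K. L x})"
proof -
  have "even (card {x \<in> K. L x \<and> L (f x)})"
    using fin inv by (intro even_card_involution[where f = f]) auto
  moreover have "card {x \<in> K. L x} = card {x \<in> K. L x \<and> L (f x)} + card {x \<in> K. L x \<and> \<not> L (f x)}"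
    using fin by (subst card_Un_disjoint[symmetric]) (auto intro: arg_cong[where f = card])
  ultimately show ?thesis by simp
qed

context stacking
begin

definition component :: "nat \<times> nat \<Rightarrow> (nat \<times> nat) set" where
  "component v = C `` {v}"

lemma in_component_iff: "y \<in> component x \<longleftrightarrow> (x, y) \<in> C"
  by (simp add: component_def)

lemma in_component_self: "x \<in> component x"
  by (simp add: in_component_iff C_refl)

lemma component_eq: "(x, y) \<in> C \<Longrightarrow> component x = component y"
  unfolding component_def using C_sym C_trans by blast

lemma conn_crossing_edge:
  assumes "(x, y) \<in> C" "snd x < j" "j \<le> snd y"
  shows "\<exists>u w. (x, u) \<in> C \<and> (u, w) \<in> E \<and> snd u < j \<and> j \<le> snd w"
  using assms unfolding glue_conn_def
proof (induction rule: rtrancl_induct)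
  case (step y' z)
  show ?case
  proof (cases "snd y' < j")
    case True
    thus ?thesis using step by blast
  next
    case False
    thus ?thesis using step by auto
  qed
qed simp

definition loop_vertices :: "(nat \<times> nat) set" where
  "loop_vertices = {v. fst v = 1 \<and> snd v < n \<and> (\<forall>p\<in>pts n. (v, outer p) \<notin> C)}"

definition loop_components :: "(nat \<times> nat) set set" where
  "loop_components = component ` loop_vertices"

lemma loops_eq_card_loop_components: "loops n P Q = card loop_components"
  by (simp add: loops_def loop_components_def loop_vertices_def component_def)

lemma finite_loop_components: "finite loop_components"
proof -
  have "loop_vertices \<subseteq> {..2} \<times> {..<n}" by (auto simp: loop_vertices_def)
  hence "finite loop_vertices" by (rule finite_subset) simp
  thus ?thesis by (simp add: loop_components_def)
qed

lemma loop_component_middle: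
  assumes K: "K \<in> loop_components" and v: "v \<in> K"
  shows "fst v = 1 \<and> snd v < n"
proof -
  obtain v0 where v0: "v0 \<in> loop_vertices" "K = component v0"
    using K by (auto simp: loop_components_def)
  have c: "(v0, v) \<in> C" using v v0 by (simp add: in_component_iff)
  have bd: "fst v \<le> 2 \<and> snd v < n" using C_bounded[OF c] v0 by (simp add: loop_vertices_def)
  moreover have "fst v = 1"
  proof (rule ccontr)
    assume "fst v \<noteq> 1"
    hence "v = outer (fst v = 2, snd v)" using bd by (cases v) (auto simp: outer_def)
    moreover have "(fst v = 2, snd v) \<in> pts n" using bd by (simp add: pts_def)
    ultimately show False using v0 c by (auto simp: loop_vertices_def)
  qed
  ultimately show ?thesis by simp
qed

lemma loop_component_closed:
  assumes K: "K \<in> loop_components" and v: "v \<in> K"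
  shows "NP v \<in> K" and "NQ v \<in> K"
proof -
  obtain v0 where K_eq: "K = component v0" using K by (auto simp: loop_components_def)
  have "v \<in> V01" "v \<in> V12" using loop_component_middle[OF K v] by (auto simp: V01_iff V12_iff)
  hence "(v, NP v) \<in> C" "(v, NQ v) \<in> C" by (auto intro: E_imp_C simp: E_iff)
  thus "NP v \<in> K" "NQ v \<in> K" using v K_eq C_trans by (auto simp: in_component_iff)
qed

lemma finite_loop_component:
  assumes "K \<in> loop_components"
  shows "finite K"
proof (rule finite_subset)
  show "K \<subseteq> {..2} \<times> {..<n}"
  proof
    fix v assume "v \<in> K"
    thus "v \<in> {..2} \<times> {..<n}" using loop_component_middle[OF assms] by (simp add: mem_Times_iff)
  qed
qed simp

definition cut_arcs :: "nat \<Rightarrow> (pt + pt) set" where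
  "cut_arcs j = Inl ` {p \<in> pts n. snd p < j \<and> j \<le> snd (P p)} \<union> Inr ` {p \<in> pts n. snd p < j \<and> j \<le> snd (Q p)}"

definition arc_component :: "pt + pt \<Rightarrow> (nat \<times> nat) set" where
  "arc_component t = (case t of Inl p \<Rightarrow> component (lowlift p) | Inr p \<Rightarrow> component (uplift p))"

lemma finite_cut_arcs: "finite (cut_arcs j)"
  using finite_pts by (simp add: cut_arcs_def)

lemma card_cut_arcs: "card (cut_arcs j) = cut_crossings n j P + cut_crossings n j Q"
  unfolding cut_arcs_def cut_crossings_def using finite_pts
  by (subst card_Un_disjoint) (auto simp: card_image)

lemma conn_crossing_component:
  assumes "(x, y) \<in> C" "snd x < j" "j \<le> snd y"
  shows "component x \<in> arc_component ` cut_arcs j"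
proof -
  obtain u w where uw: "(x, u) \<in> C" "(u, w) \<in> E" "snd u < j" "j \<le> snd w"
    using conn_crossing_edge[OF assms] by blast
  from uw(2) consider "u \<in> V01" "w = NP u" | "u \<in> V12" "w = NQ u" by (auto simp: E_iff)
  hence "component u \<in> arc_component ` cut_arcs j"
  proof cases
    case 1
    hence "Inl (unlow u) \<in> cut_arcs j" "arc_component (Inl (unlow u)) = component u"
      using uw unlow_pts[of u] by (auto simp: cut_arcs_def NP_def arc_component_def lowlift_unlow)
    thus ?thesis by force
  next
    case 2
    hence "Inr (unup u) \<in> cut_arcs j" "arc_component (Inr (unup u)) = component u"
      using uw unup_pts[of u] by (auto simp: cut_arcs_def NQ_def arc_component_def uplift_unup)
    thus ?thesis by force
  qed
  thus ?thesis using component_eq[OF uw(1)] by simp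
qed

definition outer_components_at :: "nat \<Rightarrow> (nat \<times> nat) set set" where
  "outer_components_at j = (component \<circ> outer) ` {p \<in> pts n. snd p < j \<and> j \<le> snd (compose n P Q p)}"

definition loop_components_at :: "nat \<Rightarrow> (nat \<times> nat) set set" where
  "loop_components_at j = {K \<in> loop_components. (\<exists>v\<in>K. snd v < j) \<and> (\<exists>v\<in>K. j \<le> snd v)}"

lemma outer_components_at_subset: "outer_components_at j \<subseteq> arc_component ` cut_arcs j"
proof
  fix K assume "K \<in> outer_components_at j"
  then obtain p where p: "p \<in> pts n" "snd p < j" "j \<le> snd (compose n P Q p)"
    and K: "K = component (outer p)"
    by (auto simp: outer_components_at_def)
  show "K \<in> arc_component ` cut_arcs j"
    using conn_crossing_component[OF conn_compose[OF p(1)]] p K by simp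
qed

lemma loop_components_at_subset: "loop_components_at j \<subseteq> arc_component ` cut_arcs j"
proof
  fix K assume "K \<in> loop_components_at j"
  then obtain v0 a b where v0: "K = component v0" and a: "a \<in> K" "snd a < j"
    and b: "b \<in> K" "j \<le> snd b"
    by (auto simp: loop_components_at_def loop_components_def)
  have "(v0, a) \<in> C" "(v0, b) \<in> C" using a b v0 by (simp_all add: in_component_iff)
  hence "(a, b) \<in> C" using C_sym C_trans by blast
  hence "component a \<in> arc_component ` cut_arcs j" using conn_crossing_component a b by simp
  moreover have "component a = K" using a v0 component_eq by (simp add: in_component_iff)
  ultimately show "K \<in> arc_component ` cut_arcs j" by simp
qed

lemma outer_loop_components_at_disjoint: "outer_components_at j \<inter> loop_components_at j = {}"
proof (rule ccontr)
  assume "outer_components_at j \<inter> loop_components_at j \<noteq> {}"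
  then obtain p v0 where "p \<in> pts n" "component (outer p) = component v0" "v0 \<in> loop_vertices"
    by (auto simp: outer_components_at_def loop_components_at_def loop_components_def)
  thus False using in_component_self[of "outer p"]
    by (auto simp: in_component_iff loop_vertices_def)
qed

lemma card_outer_components_at:
  "card (outer_components_at j) = cut_crossings n j (compose n P Q)"
  unfolding outer_components_at_def cut_crossings_def
proof (rule card_image, rule inj_onI)
  fix p q
  assume p: "p \<in> {p \<in> pts n. snd p < j \<and> j \<le> snd (compose n P Q p)}"
    and q: "q \<in> {p \<in> pts n. snd p < j \<and> j \<le> snd (compose n P Q p)}"
    and eq: "(component \<circ> outer) p = (component \<circ> outer) q"
  have "outer q \<in> component (outer p)" using eq in_component_self[of "outer q"] by simp
  hence "(outer p, outer q) \<in> C" by (simp add: in_component_iff)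
  hence "q = p \<or> q = compose n P Q p" using conn_outer_compose p by simp
  thus "p = q" using p q by auto
qed

text \<open>A closed loop crosses the cut an even, nonzero number of times.\<close>

lemma two_le_card_arc_fiber_loop:
  assumes K: "K \<in> loop_components_at j"
  shows "2 \<le> card {t \<in> cut_arcs j. arc_component t = K}"
proof -
  have KL: "K \<in> loop_components" using K by (simp add: loop_components_at_def)
  note mid = loop_component_middle[OF KL] and closed = loop_component_closed[OF KL]
  have Kcomp: "component v = K" if "v \<in> K" for v
  proof -
    obtain v0 where K_eq: "K = component v0" using KL by (auto simp: loop_components_def)
    hence "(v0, v) \<in> C" using that by (simp add: in_component_iff)
    thus ?thesis using component_eq K_eq by simp
  qed
  hence component_eq_K: "component v = K \<longleftrightarrow> v \<in> K" for v
    using in_component_self[of v] by metis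
  define FP where "FP = {p \<in> pts n. snd p < j \<and> j \<le> snd (P p) \<and> component (lowlift p) = K}"
  define FQ where "FQ = {p \<in> pts n. snd p < j \<and> j \<le> snd (Q p) \<and> component (uplift p) = K}"
  have fiber: "{t \<in> cut_arcs j. arc_component t = K} = Inl ` FP \<union> Inr ` FQ"
    by (auto simp: cut_arcs_def arc_component_def FP_def FQ_def)
  have FP_alt: "FP = {p \<in> pts n. snd p < j \<and> j \<le> snd (P p) \<and> lowlift p \<in> K}"
    by (simp add: FP_def component_eq_K)
  have FQ_alt: "FQ = {p \<in> pts n. snd p < j \<and> j \<le> snd (Q p) \<and> uplift p \<in> K}"
    by (simp add: FQ_def component_eq_K)
  define BP where "BP = {v \<in> K. snd v < j \<and> \<not> snd (NP v) < j}"
  define BQ where "BQ = {v \<in> K. snd v < j \<and> \<not> snd (NQ v) < j}"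
  have "lowlift ` FP = BP"
  proof (rule set_eqI, rule iffI)
    fix v assume "v \<in> lowlift ` FP"
    thus "v \<in> BP" by (auto simp: FP_alt BP_def NP_def)
  next
    fix v assume v: "v \<in> BP"
    hence "v \<in> V01" using mid by (auto simp: BP_def V01_iff)
    hence "unlow v \<in> FP" "v = lowlift (unlow v)"
      using v unlow_pts lowlift_unlow by (auto simp: FP_alt BP_def NP_def)
    thus "v \<in> lowlift ` FP" by blast
  qed
  moreover have "inj lowlift" by (metis injI unlow_lowlift)
  ultimately have cFP: "card FP = card BP" by (metis card_image inj_on_subset subset_UNIV)
  have "uplift ` FQ = BQ"
  proof (rule set_eqI, rule iffI)
    fix v assume "v \<in> uplift ` FQ"
    thus "v \<in> BQ" by (auto simp: FQ_alt BQ_def NQ_def)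
  next
    fix v assume v: "v \<in> BQ"
    hence "v \<in> V12" using mid by (auto simp: BQ_def V12_iff)
    hence "unup v \<in> FQ" "v = uplift (unup v)"
      using v unup_pts uplift_unup by (auto simp: FQ_alt BQ_def NQ_def)
    thus "v \<in> uplift ` FQ" by blast
  qed
  moreover have "inj uplift" by (metis injI unup_uplift)
  ultimately have cFQ: "card FQ = card BQ" by (metis card_image inj_on_subset subset_UNIV)
  have finK: "finite K" using finite_loop_component[OF KL] .
  have "even (card FP) \<longleftrightarrow> even (card {v \<in> K. snd v < j})"
    unfolding cFP BP_def using finK closed NP_involution mid
    by (intro even_card_leaving_involution) (auto simp: V01_iff)
  moreover have "even (card FQ) \<longleftrightarrow> even (card {v \<in> K. snd v < j})"
    unfolding cFQ BQ_def using finK closed NQ_involution mid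
    by (intro even_card_leaving_involution) (auto simp: V12_iff)
  moreover have fin: "finite FP" "finite FQ" using finite_pts by (auto simp: FP_def FQ_def)
  ultimately have even: "even (card (Inl ` FP \<union> Inr ` FQ))"
    by (subst card_Un_disjoint) (auto simp: card_image)
  have "K \<in> arc_component ` cut_arcs j" using loop_components_at_subset K by blast
  hence "Inl ` FP \<union> Inr ` FQ \<noteq> {}" using fiber by blast
  hence "card (Inl ` FP \<union> Inr ` FQ) \<noteq> 0" using fin by simp
  moreover from even obtain m where "card (Inl ` FP \<union> Inr ` FQ) = 2 * m" by (rule evenE)
  ultimately show ?thesis unfolding fiber by simp
qed

lemma cut_crossings_compose:
  "cut_crossings n j (compose n P Q) + 2 * card (loop_components_at j)
     \<le> cut_crossings n j P + cut_crossings n j Q"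
proof -
  let ?A = "arc_component ` cut_arcs j" and ?f = "\<lambda>K. card {t \<in> cut_arcs j. arc_component t = K}"
  have fin: "finite ?A" using finite_cut_arcs by simp
  have "card (outer_components_at j) + 2 * card (loop_components_at j)
        \<le> (\<Sum>K\<in>outer_components_at j. ?f K) + (\<Sum>K\<in>loop_components_at j. ?f K)"
  proof (intro add_mono)
    show "card (outer_components_at j) \<le> (\<Sum>K\<in>outer_components_at j. ?f K)"
      using outer_components_at_subset finite_cut_arcs
      by (subst card_eq_sum, intro sum_mono) (force simp: Suc_le_eq card_gt_0_iff)
    have "(\<Sum>K\<in>loop_components_at j. 2) \<le> (\<Sum>K\<in>loop_components_at j. ?f K)"
      by (rule sum_mono) (rule two_le_card_arc_fiber_loop)
    thus "2 * card (loop_components_at j) \<le> (\<Sum>K\<in>loop_components_at j. ?f K)" by simp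
  qed
  also have "\<dots> = (\<Sum>K\<in>outer_components_at j \<union> loop_components_at j. ?f K)"
    using outer_loop_components_at_disjoint outer_components_at_subset loop_components_at_subset
      finite_subset[OF _ fin]
    by (intro sum.union_disjoint[symmetric]) auto
  also have "\<dots> \<le> (\<Sum>K\<in>?A. ?f K)"
    using outer_components_at_subset loop_components_at_subset fin by (intro sum_mono2) auto
  also have "\<dots> = card (cut_arcs j)"
    using sum.image_gen[OF finite_cut_arcs, where h = "\<lambda>_. 1 :: nat" and g = arc_component] by simp
  finally show ?thesis using card_outer_components_at card_cut_arcs by simp
qed

lemma loop_component_crosses_cut:
  assumes K: "K \<in> loop_components"
  shows "\<exists>j\<le>n. K \<in> loop_components_at j"
proof -
  obtain v where v: "v \<in> K" using K in_component_self by (auto simp: loop_components_def)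
  have w: "NP v \<in> K" using loop_component_closed(1)[OF K v] .
  have lv: "fst v = 1" "fst (NP v) = 1" "snd v < n" "snd (NP v) < n"
    using loop_component_middle[OF K] v w by auto
  have "NP v \<noteq> v" using NP_involution[of v] lv by (simp add: V01_iff)
  hence ne: "snd (NP v) \<noteq> snd v" using lv by (cases v; cases "NP v") auto
  define j where "j = max (snd v) (snd (NP v))"
  have "K \<in> loop_components_at j"
  proof (cases "snd v < snd (NP v)")
    case True
    hence "snd v < j" "j \<le> snd (NP v)" by (auto simp: j_def)
    thus ?thesis using K v w unfolding loop_components_at_def by blast
  next
    case False
    hence "snd (NP v) < j" "j \<le> snd v" using ne by (auto simp: j_def)
    thus ?thesis using K v w unfolding loop_components_at_def by blast
  qed
  moreover have "j \<le> n" using lv by (simp add: j_def)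
  ultimately show ?thesis by blast
qed

text \<open>Summed over all cuts, each closed loop is counted at least once.\<close>

theorem cut_weight_compose:
  "cut_weight n (compose n P Q) + 2 * loops n P Q \<le> cut_weight n P + cut_weight n Q"
proof -
  have "card loop_components \<le> (\<Sum>K\<in>loop_components. \<Sum>j\<le>n. if K \<in> loop_components_at j then 1 else 0)"
    using loop_component_crosses_cut
    by (subst card_eq_sum, intro sum_mono) (force intro: member_le_sum[of _ "{..n}", THEN order_trans[rotated]])
  also have "\<dots> = (\<Sum>j\<le>n. card (loop_components_at j))"
    using finite_loop_components
    by (subst sum.swap) (simp add: sum.If_cases loop_components_at_def Int_def)
  finally have "loops n P Q \<le> (\<Sum>j\<le>n. card (loop_components_at j))"
    by (simp add: loops_eq_card_loop_components)
  moreover have "(\<Sum>j\<le>n. cut_crossings n j (compose n P Q) + 2 * card (loop_components_at j))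
      \<le> (\<Sum>j\<le>n. cut_crossings n j P + cut_crossings n j Q)"
    by (rule sum_mono) (rule cut_crossings_compose)
  ultimately show ?thesis
    by (simp add: cut_weight_def sum.distrib sum_distrib_left[symmetric])
qed

end

section \<open>The degree bound for the Jones-Wenzl coefficients\<close>

definition weight_bounded :: "nat \<Rightarrow> int \<Rightarrow> tl \<Rightarrow> bool" where
  "weight_bounded n s a \<longleftrightarrow> (\<forall>M\<in>CM n. min_deg_ge (int (cut_weight n M) - s) (a M))"

text \<open>Each closed loop costs a factor of degree \<open>-2\<close>, which is exactly what the cut weight
  loses when stacking.\<close>

lemma weight_bounded_tl_mult:
  assumes a: "weight_bounded n s a" and b: "weight_bounded n t b"
  shows "weight_bounded n (s + t) (tl_mult n a b)"
  unfolding weight_bounded_def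
proof
  fix M assume M: "M \<in> CM n"
  show "min_deg_ge (int (cut_weight n M) - (s + t)) (tl_mult n a b M)"
    unfolding tl_mult_def
  proof (intro min_deg_ge_sum finite_CM)
    fix P Q assume P: "P \<in> CM n" and Q: "Q \<in> CM n"
    show "min_deg_ge (int (cut_weight n M) - (s + t))
            (if compose n P Q = M then a P * b Q * loop_val ^ loops n P Q else 0)"
    proof (cases "compose n P Q = M")
      case True
      have "min_deg_ge ((int (cut_weight n P) - s) + (int (cut_weight n Q) - t) + (- 2 * int (loops n P Q)))
              (a P * b Q * loop_val ^ loops n P Q)"
        using a b P Q min_deg_ge_loop_val_power
        by (intro min_deg_ge_mult) (auto simp: weight_bounded_def)
      moreover have "cut_weight n M + 2 * loops n P Q \<le> cut_weight n P + cut_weight n Q"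
        using stacking.cut_weight_compose[of n P Q] P Q True by (simp add: stacking_def)
      ultimately show ?thesis using True by (auto elim: min_deg_ge_mono)
    qed simp
  qed
qed

lemma weight_bounded_scale:
  "weight_bounded n s a \<Longrightarrow> min_deg_ge k c \<Longrightarrow> weight_bounded n (s - k) (\<lambda>M. c * a M)"
  unfolding weight_bounded_def by (auto dest: min_deg_ge_mult[of k c] simp: algebra_simps)

lemma weight_bounded_diff:
  "weight_bounded n s a \<Longrightarrow> weight_bounded n s b \<Longrightarrow> weight_bounded n s (\<lambda>M. a M - b M)"
  unfolding weight_bounded_def by (auto intro: min_deg_ge_diff)

lemma weight_bounded_basis:
  "cut_weight n D \<le> s \<Longrightarrow> weight_bounded n (int s) (basis n D)"
  using min_deg_ge_one by (auto simp: weight_bounded_def basis_def intro: min_deg_ge_mono)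

lemma cut_weight_id_diag: "cut_weight n (id_diag n) = 0"
proof -
  have "snd (id_diag n p) = snd p" for p by (cases p) (simp add: id_diag_def)
  thus ?thesis by (simp add: cut_weight_def cut_crossings_def not_le[symmetric])
qed

lemma cut_weight_hook:
  assumes "1 \<le> i" "i < n"
  shows "cut_weight n (hook n i) \<le> 2"
proof -
  have "cut_crossings n j (hook n i) \<le> (if j = i then 2 else 0)" for j
  proof -
    have "cut_crossings n j (hook n i) \<le> card (if j = i then {(False, i - 1), (True, i - 1)} else {})"
      unfolding cut_crossings_def
      by (rule card_mono) (use assms in \<open>auto simp: hook_def pts_def split: if_splits\<close>)
    thus ?thesis by (simp split: if_splits)
  qed
  hence "cut_weight n (hook n i) \<le> (\<Sum>j\<le>n. if j = i then 2 else 0)"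
    unfolding cut_weight_def by (intro sum_mono) auto
  also have "\<dots> = 2" using assms by simp
  finally show ?thesis .
qed

definition restrict_diagram :: "nat \<Rightarrow> diagram \<Rightarrow> diagram" where
  "restrict_diagram n M = (\<lambda>p. if p \<in> pts n then M p else p)"

lemma bpos_Suc_less_iff:
  "p \<in> pts n \<Longrightarrow> q \<in> pts n \<Longrightarrow> bpos (Suc n) p < bpos (Suc n) q \<longleftrightarrow> bpos n p < bpos n q"
  by (cases p; cases q) (auto simp: bpos_def pts_def)

context
  fixes n :: nat and M :: diagram
  assumes M: "M \<in> CM (Suc n)" and through: "M (False, n) = (True, n)"
begin

lemma restrict_diagram_in_pts: "p \<in> pts n \<Longrightarrow> M p \<in> pts n"
proof -
  assume p: "p \<in> pts n"
  have through': "M (True, n) = (False, n)"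
    using CM_involution[OF M, of "(False, n)"] through by (simp add: pts_def)
  have "M p \<in> pts (Suc n)" "M (M p) = p" using CM_involution[OF M, of p] p by (auto simp: pts_def)
  moreover have "snd (M p) \<noteq> n"
  proof
    assume "snd (M p) = n"
    hence "M p = (False, n) \<or> M p = (True, n)" by (cases "M p") auto
    hence "p = (True, n) \<or> p = (False, n)" using through through' \<open>M (M p) = p\<close> by auto
    thus False using p by (auto simp: pts_def)
  qed
  ultimately show ?thesis by (simp add: pts_def)
qed

lemma restrict_diagram_CM: "restrict_diagram n M \<in> CM n"
  unfolding CM_def
proof (intro CollectI conjI ballI allI impI)
  fix p assume p: "p \<in> pts n"
  have inv: "M p \<noteq> p \<and> M (M p) = p" using CM_involution[OF M, of p] p by (simp add: pts_def)
  show "restrict_diagram n M p \<in> pts n"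
    using restrict_diagram_in_pts p by (simp add: restrict_diagram_def)
  show "restrict_diagram n M p \<noteq> p"
    using inv p by (simp add: restrict_diagram_def)
  show "restrict_diagram n M (restrict_diagram n M p) = p"
    using inv restrict_diagram_in_pts p by (simp add: restrict_diagram_def)
next
  fix p assume "p \<notin> pts n"
  thus "restrict_diagram n M p = p" by (simp add: restrict_diagram_def)
next
  let ?R = "restrict_diagram n M"
  show "\<not> (\<exists>p\<in>pts n. \<exists>q\<in>pts n. bpos n p < bpos n q \<and> bpos n q < bpos n (?R p) \<and> bpos n (?R p) < bpos n (?R q))"
  proof
    assume "\<exists>p\<in>pts n. \<exists>q\<in>pts n. bpos n p < bpos n q \<and> bpos n q < bpos n (?R p) \<and> bpos n (?R p) < bpos n (?R q)"
    then obtain p q where pq: "p \<in> pts n" "q \<in> pts n" "bpos n p < bpos n q" "bpos n q < bpos n (M p)"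
      "bpos n (M p) < bpos n (M q)"
      by (auto simp: restrict_diagram_def)
    hence "bpos (Suc n) p < bpos (Suc n) q" "bpos (Suc n) q < bpos (Suc n) (M p)"
      "bpos (Suc n) (M p) < bpos (Suc n) (M q)"
      using restrict_diagram_in_pts bpos_Suc_less_iff by simp_all
    moreover have "p \<in> pts (Suc n)" "q \<in> pts (Suc n)" using pq by (auto simp: pts_def)
    ultimately show False using M unfolding CM_def by blast
  qed
qed

lemma cut_weight_restrict_diagram: "cut_weight (Suc n) M = cut_weight n (restrict_diagram n M)"
proof -
  have "cut_crossings (Suc n) j M = cut_crossings n j (restrict_diagram n M)" if "j \<le> n" for j
  proof -
    have "{p \<in> pts (Suc n). snd p < j \<and> j \<le> snd (M p)}
          = {p \<in> pts n. snd p < j \<and> j \<le> snd (restrict_diagram n M p)}"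
      using that by (auto simp: pts_def restrict_diagram_def)
    thus ?thesis by (simp add: cut_crossings_def)
  qed
  moreover have "cut_crossings (Suc n) (Suc n) M = 0"
  proof -
    have "snd (M p) < Suc n" if "p \<in> pts (Suc n)" for p
      using CM_involution[OF M that] by (simp add: pts_def)
    hence e: "{p \<in> pts (Suc n). snd p < Suc n \<and> Suc n \<le> snd (M p)} = {}" by fastforce
    show ?thesis unfolding cut_crossings_def e by simp
  qed
  ultimately show ?thesis by (simp add: cut_weight_def)
qed

end

lemma weight_bounded_tensor1:
  assumes "weight_bounded n 0 a"
  shows "weight_bounded (Suc n) 0 (tensor1 n a)"
  unfolding weight_bounded_def
proof
  fix M assume M: "M \<in> CM (Suc n)"
  show "min_deg_ge (int (cut_weight (Suc n) M) - 0) (tensor1 n a M)"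
  proof (cases "M (False, n) = (True, n)")
    case True
    have "tensor1 n a M = a (restrict_diagram n M)"
      using True by (simp add: tensor1_def restrict_diagram_def)
    thus ?thesis using assms restrict_diagram_CM[OF M True] cut_weight_restrict_diagram[OF M True]
      by (simp add: weight_bounded_def)
  qed (simp add: tensor1_def)
qed

text \<open>By induction along the recursion: \<open>f\<^sub>m \<otimes> id\<close> keeps the bound, the hook costs \<open>2\<close>,
  and the ratio \<open>\<Delta>\<^sub>m\<^sub>-\<^sub>1 / \<Delta>\<^sub>m\<close> pays it back.\<close>

theorem weight_bounded_jw: "weight_bounded (Suc m) 0 (jw (Suc m))"
proof (induction m)
  case 0
  thus ?case using weight_bounded_basis[of 1 "id_diag 1" 0] cut_weight_id_diag by simp
next
  case (Suc m)
  let ?n = "Suc (Suc m)"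
  define g where "g = tensor1 (Suc m) (jw (Suc m))"
  define t where "t = tl_mult ?n (tl_mult ?n g (basis ?n (hook ?n (Suc m)))) g"
  have g: "weight_bounded ?n 0 g" using weight_bounded_tensor1[OF Suc.IH] by (simp add: g_def)
  have "weight_bounded ?n 2 (basis ?n (hook ?n (Suc m)))"
    using weight_bounded_basis cut_weight_hook[of "Suc m" ?n] by fastforce
  hence "weight_bounded ?n 2 t"
    unfolding t_def using weight_bounded_tl_mult[OF weight_bounded_tl_mult[OF g] g] by simp
  hence "weight_bounded ?n 0 (\<lambda>M. Delta m / Delta (Suc m) * t M)"
    using weight_bounded_scale[OF _ min_deg_ge_Delta_ratio] by fastforce
  moreover have "jw ?n = (\<lambda>M. g M - Delta m / Delta (Suc m) * t M)"
    by (simp add: g_def t_def Let_def)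
  ultimately show ?case using weight_bounded_diff[OF g] by simp
qed

section \<open>Peeling hooks off a crossingless matching\<close>

text \<open>The boundary order is a parameter so that it can be rotated.\<close>

definition noncrossing :: "nat \<Rightarrow> (pt \<Rightarrow> nat) \<Rightarrow> diagram \<Rightarrow> bool" where
  "noncrossing n f D \<longleftrightarrow> (\<forall>p\<in>pts n. \<forall>q\<in>pts n. \<not> (f p < f q \<and> f q < f (D p) \<and> f (D p) < f (D q)))"

lemma CM_iff_noncrossing: "D \<in> CM n \<longleftrightarrow> (\<forall>p\<in>pts n. D p \<in> pts n \<and> D p \<noteq> p \<and> D (D p) = p) \<and> (\<forall>p. p \<notin> pts n \<longrightarrow> D p = p) \<and> noncrossing n (bpos n) D"
  unfolding CM_def noncrossing_def by blast

lemma noncrossing_cong: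
  assumes "\<And>p. p \<in> pts n \<Longrightarrow> f p = g p" "\<And>p. p \<in> pts n \<Longrightarrow> D p \<in> pts n"
  shows "noncrossing n f D = noncrossing n g D"
  unfolding noncrossing_def using assms by auto

lemma bpos_less: "p \<in> pts n \<Longrightarrow> bpos n p < 2 * n"
  by (cases p) (auto simp: pts_def bpos_def)

lemma inj_on_bpos: "inj_on (bpos n) (pts n)"
  by (rule inj_onI) (auto simp: bpos_def pts_def split: if_splits)

lemma rotate_less_cases:
  fixes \<alpha> \<beta> \<gamma> \<delta> c N :: nat
  assumes "\<alpha> < N" "\<beta> < N" "\<gamma> < N" "\<delta> < N" "c \<le> N"
    "(\<alpha> + c) mod N < (\<beta> + c) mod N" "(\<beta> + c) mod N < (\<gamma> + c) mod N" "(\<gamma> + c) mod N < (\<delta> + c) mod N"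
  shows "(\<alpha> < \<beta> \<and> \<beta> < \<gamma> \<and> \<gamma> < \<delta>) \<or> (\<beta> < \<gamma> \<and> \<gamma> < \<delta> \<and> \<delta> < \<alpha>) \<or> (\<gamma> < \<delta> \<and> \<delta> < \<alpha> \<and> \<alpha> < \<beta>) \<or> (\<delta> < \<alpha> \<and> \<alpha> < \<beta> \<and> \<beta> < \<gamma>)"
proof -
  have m: "(x + c) mod N = (if x + c < N then x + c else x + c - N)" if "x < N" for x
  proof (cases "x + c < N")
    case False
    hence "x + c - N < N" using that assms(5) by linarith
    hence "(x + c - N) mod N = x + c - N" by simp
    moreover have "(x + c) mod N = (x + c - N) mod N" using False by (simp add: le_mod_geq)
    ultimately show ?thesis using False by simp
  qed simp
  show ?thesis using assms(6-8) m[OF assms(1)] m[OF assms(2)] m[OF assms(3)] m[OF assms(4)] assms(1-5)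
    by (simp split: if_splits; linarith)
qed

lemma noncrossing_rotate:
  assumes inv: "\<And>p. p \<in> pts n \<Longrightarrow> D p \<in> pts n \<and> D (D p) = p"
    and fN: "\<And>p. p \<in> pts n \<Longrightarrow> f p < N" and c: "c \<le> N" and nc: "noncrossing n f D"
  shows "noncrossing n (\<lambda>p. (f p + c) mod N) D"
  unfolding noncrossing_def
proof (intro ballI notI)
  fix p q assume p: "p \<in> pts n" and q: "q \<in> pts n"
    and h: "(f p + c) mod N < (f q + c) mod N \<and> (f q + c) mod N < (f (D p) + c) mod N \<and> (f (D p) + c) mod N < (f (D q) + c) mod N"
  have Dp: "D p \<in> pts n" "D (D p) = p" using inv p by auto
  have Dq: "D q \<in> pts n" "D (D q) = q" using inv q by auto
  have "(f p < f q \<and> f q < f (D p) \<and> f (D p) < f (D q)) \<or> (f q < f (D p) \<and> f (D p) < f (D q) \<and> f (D q) < f p) \<or>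
        (f (D p) < f (D q) \<and> f (D q) < f p \<and> f p < f q) \<or> (f (D q) < f p \<and> f p < f q \<and> f q < f (D p))"
    using h fN[OF p] fN[OF q] fN[OF Dp(1)] fN[OF Dq(1)] c by (intro rotate_less_cases) auto
  thus False
  proof (elim disjE)
    assume "f p < f q \<and> f q < f (D p) \<and> f (D p) < f (D q)"
    thus False using nc p q unfolding noncrossing_def by blast
  next
    assume "f q < f (D p) \<and> f (D p) < f (D q) \<and> f (D q) < f p"
    thus False using nc q Dp unfolding noncrossing_def by metis
  next
    assume "f (D p) < f (D q) \<and> f (D q) < f p \<and> f p < f q"
    thus False using nc Dp Dq unfolding noncrossing_def by metis
  next
    assume "f (D q) < f p \<and> f p < f q \<and> f q < f (D p)"
    thus False using nc Dq p unfolding noncrossing_def by metis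
  qed
qed

definition chords_cross :: "nat \<Rightarrow> nat \<Rightarrow> nat \<Rightarrow> nat \<Rightarrow> bool" where
  "chords_cross u v w z \<longleftrightarrow> ((min u v < w \<and> w < max u v) \<noteq> (min u v < z \<and> z < max u v))"

lemma noncrossing_imp_not_chords_cross:
  assumes inv: "\<And>p. p \<in> pts n \<Longrightarrow> D p \<in> pts n \<and> D (D p) = p"
    and inj: "inj_on f (pts n)" and nc: "noncrossing n f D"
    and p: "p \<in> pts n" and q: "q \<in> pts n" and qp: "q \<noteq> p" "q \<noteq> D p"
  shows "\<not> chords_cross (f p) (f (D p)) (f q) (f (D q))"
proof
  assume X: "chords_cross (f p) (f (D p)) (f q) (f (D q))"
  have Dp: "D p \<in> pts n" "D (D p) = p" using inv p by auto
  have Dq: "D q \<in> pts n" "D (D q) = q" using inv q by auto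
  have d1: "f q \<noteq> f p" "f q \<noteq> f (D p)" using qp inj p q Dp by (auto dest: inj_onD)
  have "D q \<noteq> p" "D q \<noteq> D p" using qp Dp Dq by metis+
  hence d2: "f (D q) \<noteq> f p" "f (D q) \<noteq> f (D p)" using inj p Dq Dp by (auto dest: inj_onD)
  have n1: "\<not> (f p' < f q' \<and> f q' < f (D p') \<and> f (D p') < f (D q'))" if "p' \<in> pts n" "q' \<in> pts n" for p' q'
    using nc that unfolding noncrossing_def by blast
  note a = n1[OF p q] n1[OF p Dq(1)] n1[OF Dp(1) q] n1[OF Dp(1) Dq(1)]
           n1[OF q p] n1[OF q Dp(1)] n1[OF Dq(1) p] n1[OF Dq(1) Dp(1)]
  show False using X d1 d2 a Dp(2) Dq(2) unfolding chords_cross_def min_def max_def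
    by (auto split: if_splits)
qed

lemma noncrossing_if_not_chords_cross:
  assumes h: "\<And>p q. p \<in> pts n \<Longrightarrow> q \<in> pts n \<Longrightarrow> q \<noteq> p \<Longrightarrow> q \<noteq> D p \<Longrightarrow> \<not> chords_cross (f p) (f (D p)) (f q) (f (D q))"
  shows "noncrossing n f D"
  unfolding noncrossing_def
proof (intro ballI notI)
  fix p q assume p: "p \<in> pts n" and q: "q \<in> pts n" and o: "f p < f q \<and> f q < f (D p) \<and> f (D p) < f (D q)"
  hence "q \<noteq> p" "q \<noteq> D p" by auto
  hence "\<not> chords_cross (f p) (f (D p)) (f q) (f (D q))" using h p q by blast
  thus False using o unfolding chords_cross_def by auto
qed

lemma chords_cross_commute1: "chords_cross u v w z = chords_cross v u w z" unfolding chords_cross_def by (simp add: min.commute max.commute)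
lemma chords_cross_commute2: "chords_cross u v w z = chords_cross u v z w" unfolding chords_cross_def by auto
lemma chords_cross_swap: "u \<noteq> w \<Longrightarrow> u \<noteq> z \<Longrightarrow> v \<noteq> w \<Longrightarrow> v \<noteq> z \<Longrightarrow> chords_cross u v w z = chords_cross w z u v"
  unfolding chords_cross_def min_def max_def by (auto split: if_splits)

lemma strict_mono_shift_le:
  fixes \<sigma> :: "nat \<Rightarrow> nat" and n :: nat
  assumes sm: "\<And>i k. i < k \<Longrightarrow> k < n \<Longrightarrow> \<sigma> i < (\<sigma> k :: nat)"
  shows "i + k < n \<Longrightarrow> \<sigma> i + k \<le> \<sigma> (i + k)"
proof (induction k)
  case (Suc k)
  hence "\<sigma> i + k \<le> \<sigma> (i + k)" by simp
  moreover have "\<sigma> (i + k) < \<sigma> (i + Suc k)" using sm Suc.prems by simp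
  ultimately show ?case by simp
qed simp

lemma strict_mono_bounded_eq_id:
  fixes \<sigma> :: "nat \<Rightarrow> nat" and n :: nat
  assumes sm: "\<And>i k. i < k \<Longrightarrow> k < n \<Longrightarrow> \<sigma> i < (\<sigma> k :: nat)" and bd: "\<And>i. i < n \<Longrightarrow> \<sigma> i < n"
    and i: "i < n"
  shows "\<sigma> i = i"
proof -
  have a0: "0 + i < n" using i by simp
  have a: "\<sigma> 0 + i \<le> \<sigma> (0 + i)" by (rule strict_mono_shift_le[OF sm a0])
  have e: "i + (n - 1 - i) = n - 1" using i by simp
  have b0: "i + (n - 1 - i) < n" using i by simp
  have b: "\<sigma> i + (n - 1 - i) \<le> \<sigma> (i + (n - 1 - i))" by (rule strict_mono_shift_le[OF sm b0])
  have c: "\<sigma> (n - 1) < n" using i by (intro bd) arith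
  show ?thesis using a b c e by simp
qed

lemma CM_not_crossing:
  assumes "M \<in> CM n" "p \<in> pts n" "q \<in> pts n"
    and "bpos n p < bpos n q" "bpos n q < bpos n (M p)" "bpos n (M p) < bpos n (M q)"
  shows False
  using assms unfolding CM_def by blast

lemma bpos_bottom [simp]: "bpos n (False, i) = i"
  by (simp add: bpos_def)

lemma bpos_top [simp]: "bpos n (True, i) = 2 * n - 1 - i"
  by (simp add: bpos_def)

lemma CM_all_through_eq_id_diag:
  assumes M: "M \<in> CM n" and through: "\<And>i. i < n \<Longrightarrow> fst (M (False, i))"
  shows "M = id_diag n"
proof -
  define \<sigma> where "\<sigma> i = snd (M (False, i))" for i
  have bottom: "(False, i) \<in> pts n" if "i < n" for i using that by (simp add: pts_def)
  have M_bottom: "M (False, i) = (True, \<sigma> i)" "\<sigma> i < n" if "i < n" for i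
    using CM_involution[OF M bottom[OF that]] through[OF that]
    by (cases "M (False, i)"; simp add: \<sigma>_def pts_def)+
  have "\<sigma> i < \<sigma> k" if ik: "i < k" "k < n" for i k
  proof (rule ccontr)
    have "\<sigma> i \<noteq> \<sigma> k"
      using CM_involution[OF M bottom, of i] CM_involution[OF M bottom, of k] M_bottom ik by force
    moreover assume "\<not> \<sigma> i < \<sigma> k"
    ultimately have "\<sigma> k < \<sigma> i" by simp
    hence "bpos n (False, k) < bpos n (M (False, i))" "bpos n (M (False, i)) < bpos n (M (False, k))"
      using M_bottom[of i] M_bottom[of k] ik by auto
    thus False using CM_not_crossing[OF M bottom bottom, of i k] ik by simp
  qed
  hence \<sigma>_id: "\<sigma> i = i" if "i < n" for i
    using strict_mono_bounded_eq_id[of n \<sigma>] M_bottom(2) that by blast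
  show ?thesis
  proof
    fix p show "M p = id_diag n p"
    proof (cases p)
      case (Pair b i)
      show ?thesis
      proof (cases "i < n")
        case True
        have "M (True, i) = (False, i)"
          using CM_involution[OF M bottom[OF True]] M_bottom[OF True] \<sigma>_id[OF True] by simp
        thus ?thesis using Pair True M_bottom \<sigma>_id by (cases b) (simp_all add: id_diag_def)
      next
        case False
        thus ?thesis using Pair CM_outside[OF M] by (simp add: id_diag_def pts_def)
      qed
    qed
  qed
qed

lemma CM_bottom_arc:
  assumes M: "M \<in> CM n" and ne: "M \<noteq> id_diag n"
  obtains i k where "i < k" "k < n" "M (False, i) = (False, k)"
proof -
  obtain i where i: "i < n" "\<not> fst (M (False, i))" using CM_all_through_eq_id_diag[OF M] ne by blast
  then obtain k where k: "M (False, i) = (False, k)" by (cases "M (False, i)") auto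
  have "(False, i) \<in> pts n" using i by (simp add: pts_def)
  note inv = CM_involution[OF M this]
  hence "k < n" "k \<noteq> i" "M (False, k) = (False, i)" using k by (auto simp: pts_def)
  thus thesis using that k i by (cases "i < k") (auto simp: not_less_iff_gr_or_eq)
qed

lemma CM_nested_bottom_arc:
  assumes M: "M \<in> CM n" and arc: "M (False, i) = (False, k)" and ik: "i + 1 < k" "k < n"
  obtains l where "i + 1 < l" "l < k" "M (False, i + 1) = (False, l)"
proof -
  have pts: "(False, i) \<in> pts n" "(False, i + 1) \<in> pts n" "(False, k) \<in> pts n"
    using ik by (auto simp: pts_def)
  have Mk: "M (False, k) = (False, i)" using CM_involution[OF M pts(1)] arc by simp
  obtain b l where l: "M (False, i + 1) = (b, l)" by (cases "M (False, i + 1)")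
  note inv = CM_involution[OF M pts(2), unfolded l]
  have ln: "l < n" using inv by (simp add: pts_def)
  have "\<not> b"
  proof
    assume b: b
    have "bpos n (M (False, i)) < bpos n (M (False, i + 1))" using arc l b ln ik by simp
    thus False using CM_not_crossing[OF M pts(1) pts(2)] arc ik by simp
  qed
  moreover have "l \<noteq> i + 1" "l \<noteq> k" "l \<noteq> i"
    using inv Mk arc ik \<open>\<not> b\<close> by auto
  moreover have "\<not> l < i"
  proof
    assume "l < i"
    moreover have "(False, l) \<in> pts n" "M (False, l) = (False, i + 1)" using ln inv \<open>\<not> b\<close> by (auto simp: pts_def)
    ultimately show False
      using CM_not_crossing[OF M _ pts(1), of "(False, l)"] arc ik by simp
  qed
  moreover have "\<not> k < l"
    using CM_not_crossing[OF M pts(1) pts(2)] arc l \<open>\<not> b\<close> ik by auto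
  ultimately have "i + 1 < l" "l < k" by linarith+
  moreover have "M (False, i + 1) = (False, l)" using l \<open>\<not> b\<close> by simp
  ultimately show thesis by (rule that)
qed

lemma CM_has_bottom_cup:
  assumes M: "M \<in> CM n" and ne: "M \<noteq> id_diag n"
  shows "\<exists>a. a + 1 < n \<and> M (False, a) = (False, a + 1)"
proof -
  obtain i k where "i < k" "k < n" "M (False, i) = (False, k)" using CM_bottom_arc[OF M ne] .
  thus ?thesis
  proof (induction "k - i" arbitrary: i k rule: less_induct)
    case less
    show ?case
    proof (cases "k = i + 1")
      case True
      thus ?thesis using less.prems by auto
    next
      case False
      hence "i + 1 < k" using less.prems(1) by linarith
      then obtain l where "i + 1 < l" "l < k" "M (False, i + 1) = (False, l)"
        using CM_nested_bottom_arc[OF M less.prems(3) _ less.prems(2)] by blast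
      thus ?thesis using less.hyps[of l "i + 1"] less.prems by simp
    qed
  qed
qed

lemma hook_CM: assumes i: "1 \<le> i" "i < n" shows "hook n i \<in> CM n"
  unfolding CM_def
proof (intro CollectI conjI)
  show "\<forall>p\<in>pts n. hook n i p \<in> pts n \<and> hook n i p \<noteq> p \<and> hook n i (hook n i p) = p"
  proof
    fix p assume "p \<in> pts n"
    thus "hook n i p \<in> pts n \<and> hook n i p \<noteq> p \<and> hook n i (hook n i p) = p"
      using i by (cases p) (auto simp: hook_def pts_def)
  qed
  show "\<forall>p. p \<notin> pts n \<longrightarrow> hook n i p = p"
    using i by (auto simp: hook_def pts_def)
  show "\<not> (\<exists>p\<in>pts n. \<exists>q\<in>pts n. bpos n p < bpos n q \<and> bpos n q < bpos n (hook n i p) \<and> bpos n (hook n i p) < bpos n (hook n i q))"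
  proof
    assume "\<exists>p\<in>pts n. \<exists>q\<in>pts n. bpos n p < bpos n q \<and> bpos n q < bpos n (hook n i p) \<and> bpos n (hook n i p) < bpos n (hook n i q)"
    then obtain b1 j1 b2 j2 where h: "j1 < n" "j2 < n" "bpos n (b1, j1) < bpos n (b2, j2)"
      "bpos n (b2, j2) < bpos n (hook n i (b1, j1))" "bpos n (hook n i (b1, j1)) < bpos n (hook n i (b2, j2))"
      by (auto simp: pts_def)
    show False using h i by (cases b1; cases b2) (auto simp: hook_def bpos_def split: if_splits)
  qed
qed

lemma card_filter_distinct4: "distinct [u1, u2, u3, u4] \<Longrightarrow>
  card {p \<in> {u1, u2, u3, u4}. P p} = (if P u1 then 1 else 0) + (if P u2 then 1 else 0) + (if P u3 then 1 else 0) + (if P u4 then 1 else (0::nat))"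
proof -
  assume d: "distinct [u1, u2, u3, u4]"
  have "{p \<in> {u1, u2, u3, u4}. P p} = set (filter P [u1, u2, u3, u4])" by auto
  moreover have "card (set (filter P [u1, u2, u3, u4])) = length (filter P [u1, u2, u3, u4])"
    using d by (intro distinct_card) simp
  ultimately show ?thesis by simp
qed

text \<open>Among the arcs of \<open>M\<close> passing over
  the cup, take the one whose left end \<open>xl\<close> is nearest to the cup, with right end \<open>xr\<close>.
  Reconnecting \<open>cupL\<close> to \<open>xl\<close> and \<open>cupR\<close> to \<open>xr\<close> gives a crossingless matching \<open>peel\<close>
  with \<open>M = h\<^sub>a\<^sub>+\<^sub>1 \<cdot> peel\<close>, and the two arcs through the cut \<open>a + 1\<close> disappear.
  Noncrossing is checked in the boundary order rotated by \<open>rot_pos\<close>, in which \<open>cupR\<close> comes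
  first and \<open>cupL\<close> last, so that the cup no longer wraps around.\<close>

locale bottom_cup =
  fixes n a :: nat and M :: diagram
  assumes M: "M \<in> CM n" and cup_lt: "a + 1 < n" and cup: "M (False, a) = (False, a + 1)"
begin

definition rot_pos :: "pt \<Rightarrow> nat" where
  "rot_pos p = (if fst p then 2 * n - 2 - snd p - a else if snd p \<le> a then snd p + 2 * n - a - 1 else snd p - a - 1)"

definition left_start where "left_start = 2 * n - 2 - 2 * a"

lemma rot_pos_less: "p \<in> pts n \<Longrightarrow> rot_pos p < 2 * n"
  using cup_lt by (cases p) (auto simp: rot_pos_def pts_def)

lemma bpos_eq_rot_pos: "p \<in> pts n \<Longrightarrow> bpos n p = (rot_pos p + (a + 1)) mod (2 * n)"
proof (cases p)
  case (Pair b s)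
  assume "p \<in> pts n"
  hence s: "s < n" using Pair by (simp add: pts_def)
  show ?thesis
  proof (cases b)
    case True thus ?thesis using Pair s cup_lt by (simp add: rot_pos_def bpos_def)
  next
    case False
    show ?thesis
    proof (cases "s \<le> a")
      case True
      hence "rot_pos p + (a + 1) = s + 2 * n" using Pair False cup_lt by (simp add: rot_pos_def)
      thus ?thesis using Pair False s by (simp add: bpos_def)
    next
      case f2: False
      thus ?thesis using Pair False s cup_lt by (simp add: rot_pos_def bpos_def)
    qed
  qed
qed

lemma rot_pos_eq_bpos: "p \<in> pts n \<Longrightarrow> rot_pos p = (bpos n p + (2 * n - (a + 1))) mod (2 * n)"
proof (cases p)
  case (Pair b s)
  assume "p \<in> pts n"
  hence s: "s < n" using Pair by (simp add: pts_def)
  show ?thesis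
  proof (cases b)
    case True
    hence h: "bpos n p + (2 * n - (a + 1)) = (2 * n - 2 - s - a) + 2 * n" using Pair s cup_lt by (simp add: bpos_def)
    have lt: "2 * n - 2 - s - a < 2 * n" using cup_lt by arith
    have eq: "(bpos n p + (2 * n - (a + 1))) mod (2 * n) = 2 * n - 2 - s - a"
      unfolding h using lt by simp
    show ?thesis unfolding eq using Pair True by (simp add: rot_pos_def)
  next
    case False
    show ?thesis
    proof (cases "s \<le> a")
      case True
      thus ?thesis using Pair False s cup_lt by (simp add: rot_pos_def bpos_def)
    next
      case f2: False
      hence h: "bpos n p + (2 * n - (a + 1)) = (s - a - 1) + 2 * n" using Pair False s cup_lt by (simp add: bpos_def)
      have lt: "s - a - 1 < 2 * n" using s by simp
      have eq: "(bpos n p + (2 * n - (a + 1))) mod (2 * n) = s - a - 1"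
        unfolding h using lt by simp
      show ?thesis unfolding eq using Pair False f2 by (simp add: rot_pos_def)
    qed
  qed
qed

lemma inj_on_rot_pos: "inj_on rot_pos (pts n)"
proof (rule inj_onI)
  fix p q assume "p \<in> pts n" "q \<in> pts n" "rot_pos p = rot_pos q"
  hence "bpos n p = bpos n q" using bpos_eq_rot_pos by metis
  thus "p = q" using inj_on_bpos \<open>p \<in> pts n\<close> \<open>q \<in> pts n\<close> by (auto dest: inj_onD)
qed

lemma left_iff_rot_pos: "p \<in> pts n \<Longrightarrow> snd p \<le> a \<longleftrightarrow> left_start \<le> rot_pos p"
  using cup_lt by (cases p) (auto simp: rot_pos_def pts_def left_start_def)

abbreviation cupL where "cupL \<equiv> (False, a)"
abbreviation cupR where "cupR \<equiv> (False, a + 1)"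

lemma rot_pos_cupL: "rot_pos cupL = 2 * n - 1" using cup_lt by (simp add: rot_pos_def)
lemma rot_pos_cupR: "rot_pos cupR = 0" by (simp add: rot_pos_def)
lemma cupL_pts: "cupL \<in> pts n" and cupR_pts: "cupR \<in> pts n" using cup_lt by (auto simp: pts_def)

lemma rot_pos_less_cupL: "p \<in> pts n \<Longrightarrow> p \<noteq> cupL \<Longrightarrow> rot_pos p < 2 * n - 1"
  using rot_pos_less inj_on_rot_pos cupL_pts rot_pos_cupL by (metis Suc_diff_1 inj_on_eq_iff less_Suc_eq less_nat_zero_code mult_is_0 neq0_conv)

lemma rot_pos_greater_cupR: "p \<in> pts n \<Longrightarrow> p \<noteq> cupR \<Longrightarrow> 0 < rot_pos p"
  using inj_on_rot_pos cupR_pts rot_pos_cupR by (metis inj_on_eq_iff neq0_conv)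

lemma M_involution: "p \<in> pts n \<Longrightarrow> M p \<in> pts n \<and> M p \<noteq> p \<and> M (M p) = p" using CM_involution[OF M] .

lemma M_cupR: "M cupR = cupL" using M_involution[OF cupL_pts] cup by simp

lemma noncrossing_rot_pos_M: "noncrossing n rot_pos M"
proof -
  have "noncrossing n (bpos n) M" using M by (simp add: CM_iff_noncrossing)
  hence "noncrossing n (\<lambda>p. (bpos n p + (2 * n - (a + 1))) mod (2 * n)) M"
    using M_involution bpos_less by (intro noncrossing_rotate) auto
  thus ?thesis using noncrossing_cong[of n "\<lambda>p. (bpos n p + (2 * n - (a + 1))) mod (2 * n)" rot_pos M] rot_pos_eq_bpos M_involution by simp
qed

lemma not_chords_cross_M: "p \<in> pts n \<Longrightarrow> q \<in> pts n \<Longrightarrow> q \<noteq> p \<Longrightarrow> q \<noteq> M p \<Longrightarrow> \<not> chords_cross (rot_pos p) (rot_pos (M p)) (rot_pos q) (rot_pos (M q))"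
  using noncrossing_imp_not_chords_cross[OF _ inj_on_rot_pos noncrossing_rot_pos_M] M_involution by blast

definition arcs_over_cup where "arcs_over_cup = {p \<in> pts n. snd p \<le> a \<and> a + 1 \<le> snd (M p) \<and> p \<noteq> cupL}"

text \<open>Parity: evenly many points of index \<open>\<le> a\<close> are matched to the right, and \<open>cupL\<close> is one.\<close>

lemma arcs_over_cup_nonempty: "arcs_over_cup \<noteq> {}"
proof -
  define L where "L = {p \<in> pts n. snd p \<le> a \<and> \<not> snd (M p) \<le> a}"
  have "{p \<in> pts n. snd p \<le> a} = UNIV \<times> {..a}" using cup_lt by (auto simp: pts_def)
  hence "even (card {p \<in> pts n. snd p \<le> a})" by (simp add: card_cartesian_product card_UNIV_bool)
  moreover have "even (card L) \<longleftrightarrow> even (card {p \<in> pts n. snd p \<le> a})"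
    unfolding L_def by (rule even_card_leaving_involution[OF finite_pts M_involution])
  ultimately have "even (card L)" by simp
  moreover have "cupL \<in> L" using cupL_pts cup by (simp add: L_def)
  ultimately have "L \<noteq> {cupL}" by auto
  then obtain p where "p \<in> L" "p \<noteq> cupL" using \<open>cupL \<in> L\<close> by blast
  hence "p \<in> arcs_over_cup" by (auto simp: L_def arcs_over_cup_def)
  thus ?thesis by blast
qed

lemma finite_arcs_over_cup: "finite arcs_over_cup" using finite_pts by (simp add: arcs_over_cup_def)

definition xl where "xl = (SOME xl. xl \<in> arcs_over_cup \<and> (\<forall>z\<in>arcs_over_cup. rot_pos z \<le> rot_pos xl))"

lemma xl_exists: "\<exists>xl. xl \<in> arcs_over_cup \<and> (\<forall>z\<in>arcs_over_cup. rot_pos z \<le> rot_pos xl)"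
proof -
  define m where "m = Max (rot_pos ` arcs_over_cup)"
  have "m \<in> rot_pos ` arcs_over_cup" unfolding m_def using finite_arcs_over_cup arcs_over_cup_nonempty by (intro Max_in) auto
  then obtain x0 where "x0 \<in> arcs_over_cup" "rot_pos x0 = m" by blast
  moreover have "\<forall>z\<in>arcs_over_cup. rot_pos z \<le> m" unfolding m_def using finite_arcs_over_cup by auto
  ultimately show ?thesis by metis
qed

lemma xl_props: "xl \<in> arcs_over_cup" "\<And>z. z \<in> arcs_over_cup \<Longrightarrow> rot_pos z \<le> rot_pos xl"
  using someI_ex[OF xl_exists] unfolding xl_def[symmetric] by auto

definition xr where "xr = M xl"

lemma xl_xr: "xl \<in> pts n" "snd xl \<le> a" "a + 1 \<le> snd xr" "xl \<noteq> cupL" "xr \<in> pts n" "M xr = xl"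
  "xl \<noteq> cupR" "xr \<noteq> cupL" "xr \<noteq> cupR" "xl \<noteq> xr"
proof -
  show x1: "xl \<in> pts n" "snd xl \<le> a" "a + 1 \<le> snd xr" "xl \<noteq> cupL"
    using xl_props(1) by (auto simp: arcs_over_cup_def xr_def)
  show "xr \<in> pts n" "M xr = xl" using M_involution[OF x1(1)] by (auto simp: xr_def)
  show "xl \<noteq> cupR" using x1 by auto
  show "xr \<noteq> cupL" using x1 by auto
  show "xr \<noteq> cupR"
  proof
    assume "xr = cupR"
    hence "M xr = cupL" using M_cupR by simp
    thus False using M_involution[OF x1(1)] x1(4) by (simp add: xr_def)
  qed
  show "xl \<noteq> xr" using x1 by auto
qed

lemma rot_pos_xl: "left_start \<le> rot_pos xl" using left_iff_rot_pos[of xl] xl_xr by simp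
lemma rot_pos_xr: "rot_pos xr < left_start" using left_iff_rot_pos[of xr] xl_xr by simp

definition moved where "moved = {cupL, cupR, xl, xr}"

lemma M_moved: "p \<in> pts n \<Longrightarrow> p \<notin> moved \<Longrightarrow> M p \<notin> moved"
proof
  assume p: "p \<in> pts n" "p \<notin> moved" and "M p \<in> moved"
  hence "M (M p) \<in> M ` moved" by blast
  moreover have "M ` moved = moved" using cup M_cupR xl_xr by (auto simp: moved_def xr_def)
  ultimately show False using M_involution[OF p(1)] p(2) by simp
qed

definition peel :: diagram where
  "peel p = (if p = cupL then xl else if p = xl then cupL else if p = cupR then xr else if p = xr then cupR else M p)"

lemma peel_moved: "peel cupL = xl" "peel xl = cupL" "peel cupR = xr" "peel xr = cupR"
  using xl_xr by (auto simp: peel_def)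

lemma peel_unmoved: "p \<notin> moved \<Longrightarrow> peel p = M p" by (auto simp: peel_def moved_def)

lemma moved_pts: "moved \<subseteq> pts n" using xl_xr cupL_pts cupR_pts by (auto simp: moved_def)

lemma peel_involution: "p \<in> pts n \<Longrightarrow> peel p \<in> pts n \<and> peel p \<noteq> p \<and> peel (peel p) = p"
proof -
  assume p: "p \<in> pts n"
  show ?thesis
  proof (cases "p \<in> moved")
    case True
    thus ?thesis using xl_xr cupL_pts cupR_pts peel_moved by (auto simp: moved_def)
  next
    case False
    thus ?thesis using peel_unmoved[OF False] peel_unmoved[OF M_moved[OF p False]] M_involution[OF p] by simp
  qed
qed

text \<open>This is where the choice of \<open>xl\<close> nearest to the cup is used.\<close>

lemma no_arc_straddles_xl:
  assumes u: "u \<in> pts n" "u \<notin> moved" and o: "rot_pos u < rot_pos xl" "rot_pos xl < rot_pos (M u)"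
  shows False
proof -
  let ?v = "M u"
  have v: "?v \<in> pts n" "?v \<notin> moved" "M ?v = u" using M_involution[OF u(1)] M_moved[OF u] by auto
  have vL: "left_start \<le> rot_pos ?v" using o rot_pos_xl by simp
  show False
  proof (cases "rot_pos u < left_start")
    case True
    have "?v \<in> arcs_over_cup" using v vL True left_iff_rot_pos[OF v(1)] left_iff_rot_pos[OF u(1)] by (auto simp: arcs_over_cup_def moved_def)
    thus False using xl_props(2) o by fastforce
  next
    case False
    have "\<not> chords_cross (rot_pos xl) (rot_pos (M xl)) (rot_pos u) (rot_pos (M u))"
      using not_chords_cross_M[OF xl_xr(1) u(1)] u(2) by (auto simp: moved_def xr_def)
    moreover have "rot_pos xr < rot_pos u" using False rot_pos_xr by simp
    ultimately show False using o by (simp add: chords_cross_def xr_def)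
  qed
qed

lemma not_chords_cross_cupL_xl:
  assumes u: "u \<in> pts n" "u \<notin> moved"
  shows "\<not> chords_cross (rot_pos cupL) (rot_pos xl) (rot_pos u) (rot_pos (M u))"
proof
  assume X: "chords_cross (rot_pos cupL) (rot_pos xl) (rot_pos u) (rot_pos (M u))"
  have v: "M u \<in> pts n" "M u \<notin> moved" "M (M u) = u" using M_involution[OF u(1)] M_moved[OF u] by auto
  have ne: "u \<noteq> xl" "M u \<noteq> xl" "u \<noteq> cupL" "M u \<noteq> cupL" using u v by (auto simp: moved_def)
  have r1: "rot_pos u \<noteq> rot_pos xl" "rot_pos (M u) \<noteq> rot_pos xl" using ne inj_on_rot_pos u v xl_xr by (auto dest: inj_onD)
  have r2: "rot_pos u < 2 * n - 1" "rot_pos (M u) < 2 * n - 1" using rot_pos_less_cupL u v ne by auto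
  have rx: "rot_pos xl < 2 * n - 1" using rot_pos_less_cupL xl_xr by auto
  from X r1 r2 rx have "(rot_pos u < rot_pos xl \<and> rot_pos xl < rot_pos (M u)) \<or> (rot_pos (M u) < rot_pos xl \<and> rot_pos xl < rot_pos u)"
    unfolding chords_cross_def rot_pos_cupL by (auto simp: min_def max_def split: if_splits)
  thus False
  proof
    assume "rot_pos u < rot_pos xl \<and> rot_pos xl < rot_pos (M u)" thus False using no_arc_straddles_xl u by blast
  next
    assume "rot_pos (M u) < rot_pos xl \<and> rot_pos xl < rot_pos u" thus False using no_arc_straddles_xl[of "M u"] v by simp
  qed
qed

lemma no_arc_straddles_xr:
  assumes u: "u \<in> pts n" "u \<notin> moved" and o: "0 < rot_pos u" "rot_pos u < rot_pos xr" "rot_pos xr < rot_pos (M u)"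
  shows False
proof -
  let ?v = "M u"
  have v: "?v \<in> pts n" "?v \<notin> moved" "M ?v = u" using M_involution[OF u(1)] M_moved[OF u] by auto
  have uR: "rot_pos u < left_start" using o rot_pos_xr by simp
  have nX: "\<not> chords_cross (rot_pos xl) (rot_pos (M xl)) (rot_pos u) (rot_pos (M u))"
    using not_chords_cross_M[OF xl_xr(1) u(1)] u(2) by (auto simp: moved_def xr_def)
  show False
  proof (cases "left_start \<le> rot_pos ?v")
    case True
    have "?v \<in> arcs_over_cup" using v True uR left_iff_rot_pos[OF v(1)] left_iff_rot_pos[OF u(1)] by (auto simp: arcs_over_cup_def moved_def)
    hence "rot_pos ?v \<le> rot_pos xl" using xl_props(2) by blast
    moreover have "rot_pos ?v \<noteq> rot_pos xl" using v xl_xr inj_on_rot_pos by (auto simp: moved_def dest: inj_onD)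
    ultimately have "rot_pos ?v < rot_pos xl" by simp
    thus False using nX o by (simp add: chords_cross_def xr_def)
  next
    case False
    hence "rot_pos ?v < rot_pos xl" using rot_pos_xl by simp
    thus False using nX o by (simp add: chords_cross_def xr_def)
  qed
qed

lemma not_chords_cross_cupR_xr:
  assumes u: "u \<in> pts n" "u \<notin> moved"
  shows "\<not> chords_cross (rot_pos cupR) (rot_pos xr) (rot_pos u) (rot_pos (M u))"
proof
  assume X: "chords_cross (rot_pos cupR) (rot_pos xr) (rot_pos u) (rot_pos (M u))"
  have v: "M u \<in> pts n" "M u \<notin> moved" "M (M u) = u" using M_involution[OF u(1)] M_moved[OF u] by auto
  have ne: "u \<noteq> xr" "M u \<noteq> xr" "u \<noteq> cupR" "M u \<noteq> cupR" using u v by (auto simp: moved_def)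
  have r1: "rot_pos u \<noteq> rot_pos xr" "rot_pos (M u) \<noteq> rot_pos xr" using ne inj_on_rot_pos u v xl_xr by (auto dest: inj_onD)
  have r2: "0 < rot_pos u" "0 < rot_pos (M u)" using rot_pos_greater_cupR u v ne by auto
  from X r1 r2 have "(rot_pos u < rot_pos xr \<and> rot_pos xr < rot_pos (M u)) \<or> (rot_pos (M u) < rot_pos xr \<and> rot_pos xr < rot_pos u)"
    unfolding chords_cross_def rot_pos_cupR by (auto simp: min_def max_def split: if_splits)
  thus False
  proof
    assume "rot_pos u < rot_pos xr \<and> rot_pos xr < rot_pos (M u)" thus False using no_arc_straddles_xr u r2 by blast
  next
    assume "rot_pos (M u) < rot_pos xr \<and> rot_pos xr < rot_pos u" thus False using no_arc_straddles_xr[of "M u"] v r2 by simp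
  qed
qed

lemma not_chords_cross_new_arcs: "\<not> chords_cross (rot_pos cupL) (rot_pos xl) (rot_pos cupR) (rot_pos xr)"
  using rot_pos_xl rot_pos_xr rot_pos_less_cupL[OF xl_xr(1) xl_xr(4)] unfolding chords_cross_def rot_pos_cupL rot_pos_cupR by (auto simp: min_def max_def)

lemma rot_pos_moved_distinct: "rot_pos cupL \<noteq> rot_pos cupR" "rot_pos cupL \<noteq> rot_pos xl" "rot_pos cupL \<noteq> rot_pos xr"
  "rot_pos cupR \<noteq> rot_pos xl" "rot_pos cupR \<noteq> rot_pos xr" "rot_pos xl \<noteq> rot_pos xr"
  using inj_on_rot_pos cupL_pts cupR_pts xl_xr by (auto dest: inj_onD)

lemma peel_not_cross_moved_unmoved:
  assumes p: "p \<in> moved" and q: "q \<in> pts n" "q \<notin> moved"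
  shows "\<not> chords_cross (rot_pos p) (rot_pos (peel p)) (rot_pos q) (rot_pos (peel q))"
proof -
  have m: "peel q = M q" using peel_unmoved[OF q(2)] .
  from p consider "p = cupL" | "p = cupR" | "p = xl" | "p = xr" by (auto simp: moved_def)
  thus ?thesis
  proof cases
    case 1 thus ?thesis using not_chords_cross_cupL_xl[OF q] m peel_moved by simp
  next
    case 2 thus ?thesis using not_chords_cross_cupR_xr[OF q] m peel_moved by simp
  next
    case 3 thus ?thesis using not_chords_cross_cupL_xl[OF q] m peel_moved chords_cross_commute1 by metis
  next
    case 4 thus ?thesis using not_chords_cross_cupR_xr[OF q] m peel_moved chords_cross_commute1 by metis
  qed
qed

lemma peel_moved_closed: "p \<in> moved \<Longrightarrow> peel p \<in> moved" using peel_moved by (auto simp: moved_def)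

lemma peel_not_cross_unmoved_moved:
  assumes p: "p \<in> pts n" "p \<notin> moved" and q: "q \<in> moved"
  shows "\<not> chords_cross (rot_pos p) (rot_pos (peel p)) (rot_pos q) (rot_pos (peel q))"
proof -
  have q2: "peel q \<in> moved" using peel_moved_closed[OF q] .
  have p2: "peel p \<in> pts n" "peel p \<notin> moved" using peel_unmoved[OF p(2)] M_involution[OF p(1)] M_moved[OF p] by auto
  have d: "rot_pos p \<noteq> rot_pos q" "rot_pos p \<noteq> rot_pos (peel q)" "rot_pos (peel p) \<noteq> rot_pos q" "rot_pos (peel p) \<noteq> rot_pos (peel q)"
    using inj_on_rot_pos p p2 q q2 moved_pts by (auto dest: inj_onD)
  have "\<not> chords_cross (rot_pos q) (rot_pos (peel q)) (rot_pos p) (rot_pos (peel p))" using peel_not_cross_moved_unmoved[OF q p] .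
  thus ?thesis using chords_cross_swap[OF d] by simp
qed

lemma peel_not_cross_moved_moved:
  assumes p: "p \<in> moved" and q: "q \<in> moved" and ne: "q \<noteq> p" "q \<noteq> peel p"
  shows "\<not> chords_cross (rot_pos p) (rot_pos (peel p)) (rot_pos q) (rot_pos (peel q))"
proof -
  have new_arcs_swapped: "\<not> chords_cross (rot_pos cupR) (rot_pos xr) (rot_pos cupL) (rot_pos xl)"
    using not_chords_cross_new_arcs chords_cross_swap rot_pos_moved_distinct by metis
  from p consider "p = cupL" | "p = cupR" | "p = xl" | "p = xr" by (auto simp: moved_def)
  thus ?thesis
  proof cases
    case 1
    hence "q = cupR \<or> q = xr" using q ne peel_moved by (auto simp: moved_def)
    thus ?thesis using 1 not_chords_cross_new_arcs peel_moved chords_cross_commute2 by metis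
  next
    case 3
    hence "q = cupR \<or> q = xr" using q ne peel_moved by (auto simp: moved_def)
    thus ?thesis using 3 not_chords_cross_new_arcs peel_moved chords_cross_commute1 chords_cross_commute2 by metis
  next
    case 2
    hence "q = cupL \<or> q = xl" using q ne peel_moved by (auto simp: moved_def)
    thus ?thesis using 2 new_arcs_swapped peel_moved chords_cross_commute2 by metis
  next
    case 4
    hence "q = cupL \<or> q = xl" using q ne peel_moved by (auto simp: moved_def)
    thus ?thesis using 4 new_arcs_swapped peel_moved chords_cross_commute1 chords_cross_commute2 by metis
  qed
qed

lemma noncrossing_rot_pos_peel: "noncrossing n rot_pos peel"
proof (rule noncrossing_if_not_chords_cross)
  fix p q assume p: "p \<in> pts n" and q: "q \<in> pts n" and ne: "q \<noteq> p" "q \<noteq> peel p"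
  show "\<not> chords_cross (rot_pos p) (rot_pos (peel p)) (rot_pos q) (rot_pos (peel q))"
  proof (cases "p \<in> moved")
    case True
    show ?thesis
    proof (cases "q \<in> moved")
      case True thus ?thesis using peel_not_cross_moved_moved \<open>p \<in> moved\<close> ne by blast
    next
      case False thus ?thesis using peel_not_cross_moved_unmoved \<open>p \<in> moved\<close> q by blast
    qed
  next
    case pS: False
    show ?thesis
    proof (cases "q \<in> moved")
      case True thus ?thesis using peel_not_cross_unmoved_moved p pS by blast
    next
      case False
      thus ?thesis using not_chords_cross_M[OF p q] ne peel_unmoved pS by simp
    qed
  qed
qed

lemma peel_CM: "peel \<in> CM n"
proof -
  have "noncrossing n (\<lambda>p. (rot_pos p + (a + 1)) mod (2 * n)) peel"
    using peel_involution rot_pos_less cup_lt by (intro noncrossing_rotate[OF _ _ _ noncrossing_rot_pos_peel]) auto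
  hence nc: "noncrossing n (bpos n) peel"
    using noncrossing_cong[of n "\<lambda>p. (rot_pos p + (a + 1)) mod (2 * n)" "bpos n" peel] bpos_eq_rot_pos peel_involution by simp
  have out: "peel p = p" if "p \<notin> pts n" for p
  proof -
    have "p \<notin> moved" using that moved_pts by blast
    thus ?thesis using peel_unmoved CM_outside[OF M that] by simp
  qed
  show ?thesis unfolding CM_iff_noncrossing using peel_involution out nc by blast
qed

abbreviation cup_hook where "cup_hook \<equiv> hook n (a + 1)"

lemma cup_hook_CM: "cup_hook \<in> CM n" using cup_lt by (intro hook_CM) auto

lemma stacking_cup_hook_peel: "stacking n cup_hook peel"
  using cup_hook_CM peel_CM by (simp add: stacking_def)

sublocale hp: stacking n cup_hook peel
  by (rule stacking_cup_hook_peel)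

lemma conn_hook_edge: "p \<in> pts n \<Longrightarrow> (lowlift p, lowlift (cup_hook p)) \<in> hp.C"
  unfolding glue_conn_def glue_edges_def by blast

lemma conn_peel_edge: "p \<in> pts n \<Longrightarrow> (uplift p, uplift (peel p)) \<in> hp.C"
  unfolding glue_conn_def glue_edges_def by blast

lemma conn_outer_uplift:
  assumes p: "p \<in> pts n" "p \<noteq> cupL" "p \<noteq> cupR"
  shows "(outer p, uplift p) \<in> hp.C"
proof (cases p)
  case (Pair b j)
  show ?thesis
  proof (cases b)
    case True
    hence "outer p = uplift p" using Pair by (simp add: outer_def uplift_def)
    thus ?thesis using hp.C_refl by simp
  next
    case False
    hence p_eq: "p = (False, j)" using Pair by simp
    have "j < n" "j \<noteq> a" "j \<noteq> a + 1" using p p_eq by (auto simp: pts_def)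
    hence "lowlift (cup_hook p) = uplift p" "lowlift p = outer p"
      using p_eq by (simp_all add: hook_def lowlift_def uplift_def outer_def)
    thus ?thesis using conn_hook_edge[OF p(1)] by simp
  qed
qed

text \<open>The path from \<open>xl\<close> runs up to \<open>peel\<close>, over to the cup, through the upper cup of the hook
  and back out to \<open>xr\<close>.\<close>

lemma conn_outer_xl_xr: "(outer xl, outer xr) \<in> hp.C"
proof -
  have "(True, a) \<in> pts n" using cup_lt by (simp add: pts_def)
  hence "(uplift cupL, uplift cupR) \<in> hp.C"
    using conn_hook_edge[of "(True, a)"] by (simp add: hook_def lowlift_def uplift_def)
  moreover have "(outer xl, uplift xl) \<in> hp.C" "(uplift xr, outer xr) \<in> hp.C"
    using conn_outer_uplift xl_xr hp.C_sym by blast+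
  moreover have "(uplift xl, uplift cupL) \<in> hp.C" "(uplift cupR, uplift xr) \<in> hp.C"
    using conn_peel_edge[OF xl_xr(1)] conn_peel_edge[OF cupR_pts] peel_moved by simp_all
  ultimately show ?thesis using hp.C_trans by meson
qed

lemma conn_outer_M:
  assumes q: "q \<in> pts n"
  shows "(outer q, outer (M q)) \<in> hp.C"
proof (cases "q \<in> moved")
  case True
  then consider "q = cupL" | "q = cupR" | "q = xl" | "q = xr" by (auto simp: moved_def)
  thus ?thesis
  proof cases
    case 1
    thus ?thesis using conn_hook_edge[OF cupL_pts] cup by (simp add: hook_def outer_def lowlift_def)
  next
    case 2
    thus ?thesis using conn_hook_edge[OF cupR_pts] M_cupR by (simp add: hook_def outer_def lowlift_def)
  next
    case 3
    thus ?thesis using conn_outer_xl_xr by (simp add: xr_def)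
  next
    case 4
    thus ?thesis using conn_outer_xl_xr hp.C_sym xl_xr(6) by simp
  qed
next
  case False
  have Mq: "M q \<in> pts n" "M q \<notin> moved" using M_involution[OF q] M_moved[OF q False] by auto
  have "(outer q, uplift q) \<in> hp.C" "(uplift (M q), outer (M q)) \<in> hp.C"
    using conn_outer_uplift[OF q] conn_outer_uplift[OF Mq(1)] False Mq(2) hp.C_sym
    by (auto simp: moved_def)
  moreover have "(uplift q, uplift (M q)) \<in> hp.C"
    using conn_peel_edge[OF q] peel_unmoved[OF False] by simp
  ultimately show ?thesis using hp.C_trans by meson
qed

lemma compose_cup_hook_peel: "compose n cup_hook peel = M"
proof
  fix p
  show "compose n cup_hook peel p = M p"
  proof (cases "p \<in> pts n")
    case True
    thus ?thesis using hp.conn_outer_compose[OF True conn_outer_M[OF True]] M_involution[OF True] by auto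
  next
    case False
    thus ?thesis using CM_outside[OF M False] by (simp add: compose_def)
  qed
qed

lemma cut_crossings_split:
  assumes "\<And>p. p \<in> pts n \<Longrightarrow> p \<notin> moved \<Longrightarrow> D p = M p"
  shows "cut_crossings n j D = card {p \<in> pts n - moved. snd p < j \<and> j \<le> snd (M p)} + card {p \<in> moved. snd p < j \<and> j \<le> snd (D p)}"
proof -
  have "{p \<in> pts n. snd p < j \<and> j \<le> snd (D p)} = {p \<in> pts n - moved. snd p < j \<and> j \<le> snd (M p)} \<union> {p \<in> moved. snd p < j \<and> j \<le> snd (D p)}"
    using assms moved_pts by auto
  moreover have "finite (pts n - moved)" "finite moved" using finite_pts by (auto simp: moved_def)
  ultimately show ?thesis unfolding cut_crossings_def by (subst card_Un_disjoint[symmetric]) auto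
qed

lemma moved_distinct: "distinct [cupL, cupR, xl, xr]" using xl_xr by auto

lemma card_filter_moved: "card {p \<in> moved. Q p} = (if Q cupL then 1 else 0) + (if Q cupR then 1 else 0) + (if Q xl then 1 else 0) + (if Q xr then 1 else (0::nat))"
  unfolding moved_def by (rule card_filter_distinct4[OF moved_distinct])

lemma cut_crossings_peel: "cut_crossings n j peel + (if j = a + 1 then 2 else 0) \<le> cut_crossings n j M"
proof -
  have c1: "cut_crossings n j peel = card {p \<in> pts n - moved. snd p < j \<and> j \<le> snd (M p)} + card {p \<in> moved. snd p < j \<and> j \<le> snd (peel p)}"
    using peel_unmoved by (intro cut_crossings_split) auto
  have c2: "cut_crossings n j M = card {p \<in> pts n - moved. snd p < j \<and> j \<le> snd (M p)} + card {p \<in> moved. snd p < j \<and> j \<le> snd (M p)}"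
    by (intro cut_crossings_split) auto
  have "card {p \<in> moved. snd p < j \<and> j \<le> snd (peel p)} + (if j = a + 1 then 2 else 0) \<le> card {p \<in> moved. snd p < j \<and> j \<le> snd (M p)}"
    unfolding card_filter_moved using xl_xr peel_moved cup M_cupR by (simp add: xr_def)
  thus ?thesis using c1 c2 by simp
qed

lemma cut_weight_peel: "cut_weight n peel + 2 \<le> cut_weight n M"
proof -
  have "(\<Sum>j\<le>n. cut_crossings n j peel + (if j = a + 1 then 2 else 0)) \<le> (\<Sum>j\<le>n. cut_crossings n j M)"
    by (intro sum_mono cut_crossings_peel)
  moreover have "(\<Sum>j\<le>n. (if j = a + 1 then 2 else 0::nat)) = 2" using cup_lt by simp
  ultimately show ?thesis by (simp add: cut_weight_def sum.distrib)
qed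

end

lemma hook_word_exists:
  assumes "M \<in> CM n"
  shows "\<exists>w. set w \<subseteq> {1..n-1} \<and> word_eval n w = M \<and> 2 * length w \<le> cut_weight n M"
  using assms
proof (induction "cut_weight n M" arbitrary: M rule: less_induct)
  case less
  show ?case
  proof (cases "M = id_diag n")
    case True thus ?thesis by (intro exI[of _ "[]"]) (simp add: word_eval_def)
  next
    case False
    then obtain a where a: "a + 1 < n" "M (False, a) = (False, a + 1)" using CM_has_bottom_cup less.prems by blast
    interpret D: bottom_cup n a M using less.prems a by (simp add: bottom_cup_def)
    have "cut_weight n D.peel < cut_weight n M" using D.cut_weight_peel by simp
    then obtain w where w: "set w \<subseteq> {1..n-1}" "word_eval n w = D.peel" "2 * length w \<le> cut_weight n D.peel"
      using less.hyps D.peel_CM by blast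
    have "word_eval n ((a + 1) # w) = M" using w(2) D.compose_cup_hook_peel by (simp add: word_eval_def)
    moreover have "set ((a + 1) # w) \<subseteq> {1..n-1}" using w(1) a by auto
    moreover have "2 * length ((a + 1) # w) \<le> cut_weight n M" using w(3) D.cut_weight_peel by simp
    ultimately show ?thesis by blast
  qed
qed

theorem mainTheorem9:
  fixes n :: nat and M :: diagram
  assumes "n \<ge> 1" and "M \<in> CM n" and "jw n M \<noteq> 0"
  shows "min_deg (jw n M) \<ge> 2 * int (hook_len n M)"
proof -
  obtain m where n: "n = Suc m" using assms(1) by (cases n) auto
  have "min_deg_ge (int (cut_weight n M)) (jw n M)"
    using weight_bounded_jw[of m] assms(2) n by (simp add: weight_bounded_def)
  hence weight_le: "int (cut_weight n M) \<le> min_deg (jw n M)"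
    using assms(3) by (rule min_deg_geD)
  obtain w where w: "set w \<subseteq> {1..n-1}" "word_eval n w = M" "2 * length w \<le> cut_weight n M"
    using hook_word_exists[OF assms(2)] by blast
  have "hook_len n M \<le> length w"
    unfolding hook_len_def by (rule Least_le) (use w in blast)
  thus ?thesis using w(3) weight_le by linarith
qed

end
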